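(* Let $d\ge1$, $Q=2d+2$, and let $X_1,\dots,X_{2d}$ be the Heisenberg vector fields on $\mathbb{R}^{2d+1}$. Let $0<\lambda\le\Lambda$, $A$ an index set, $b^\alpha:\mathbb{R}^{2d+1}\to\mathbb{R}^{2d}$, $c^\alpha:\mathbb{R}^{2d+1}\to\mathbb{R}$ with $H_i(x,r,p)=\inf_\alpha\{c^\alpha(x)r-b^\alpha(x)\cdot p\}$ and $H_s(x,r,p)=\sup_\alpha\{c^\alpha(x)r-b^\alpha(x)\cdot p\}$ finite, $b^\alpha$ locally Lipschitz uniformly in $\alpha$ (for every $R>0$ there is $K_R$ with $\sup_{|x|,|y|\le R,\alpha}|b^\alpha(x)-b^\alpha(y)|\le K_R|x-y|$), and $c^\alpha\ge0$ continuous on each ball $\{|x|\le R\}$ uniformly in $\alpha$. Assume $$\sup_{\alpha\in A}\Big\{b^\alpha(x)\cdot\frac{\eta}{|x_H|^2}-c^\alpha(x)\frac{\rho^4}{|x_H|^2}\log\rho\Big\}\le\lambda-\Lambda(Q-1)$$ for all $x$ with $\rho(x)$ sufficiently large and $|x_H|\ne0$. (A) Let $u\in\mathrm{USC}(\mathbb{R}^{2d+1})$ be a viscosity subsolution of $\mathcal{M}^-_{\lambda,\Lambda}((D^2_{\mathbb{H}^d}u)^* )+H_i(x,u,D_{\mathbb{H}^d}u)=0$ in $\mathbb{R}^{2d+1}$ with $\limsup_{|x|\to\infty}\frac{u(x)}{\log\rho(x)}\le0$. If either $c^\alpha\equiv0$ or $u\ge0$, then $u$ is constant. (B) Let $v\in\mathrm{LSC}(\mathbb{R}^{2d+1})$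 be a viscosity supersolution of $\mathcal{M}^+_{\lambda,\Lambda}((D^2_{\mathbb{H}^d}v)^* )+H_s(x,v,D_{\mathbb{H}^d}v)=0$ in $\mathbb{R}^{2d+1}$ with $\liminf_{|x|\to\infty}\frac{v(x)}{\log\rho(x)}\ge0$. If either $c^\alpha\equiv0$ or $v\le0$, then $v$ is constant.
   Context: Heisenberg vector fields on $\mathbb{R}^{2d+1}$: $X_i=\partial_i+2x_{i+d}\partial_{2d+1}$, $X_{i+d}=\partial_{i+d}-2x_i\partial_{2d+1}$, $i=1,\dots,d$. $x_H=(x_1,\dots,x_{2d})$; $\rho(x)=(|x_H|^4+x_{2d+1}^2)^{1/4}$; $\eta\in\mathbb{R}^{2d}$ with $\eta_i=x_i|x_H|^2+x_{i+d}x_{2d+1}$, $\eta_{i+d}=x_{i+d}|x_H|^2-x_ix_{2d+1}$ for $i=1,\dots,d$. $D_{\mathbb{H}^d}u=(X_1u,\dots,X_{2d}u)$, $(D^2_{\mathbb{H}^d}u)_{ij}=X_i(X_ju)$, and $Y^*$ is the symmetrized matrix of $Y$; equations are understood in the viscosity sense after rewriting in Euclidean variables. Pucci operators on symmetric $2d\times2d$ matrices: $\mathcal{M}^+_{\lambda,\Lambda}(M)=\sup\mathrm{Tr}(-AM)$, $\mathcal{M}^-_{\lambda,\Lambda}(M)=\inf\mathrm{Tr}(-AM)$, over symmetric $A$ with $\lambda|\xi|^2\le A\xi\cdot\xi\le\Lambda|\xi|^2$. *)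

theory Defs
  imports "HOL-Analysis.Analysis"
begin

text \<open>Points of R^(2d+1): vectors indexed by 'd + 'd + unit.
  Coordinate Inl i is x_i, Inr (Inl i) is x_(i+d), Inr (Inr ()) is x_(2d+1).
  Horizontal vectors (R^(2d)) are indexed by 'd + 'd.\<close>

type_synonym 'd pt = "real ^ ('d + 'd + unit)"
type_synonym 'd hz = "real ^ ('d + 'd)"

definition tcoord :: "('d::finite) pt \<Rightarrow> real" where
  "tcoord x = x $ Inr (Inr ())"

definition hproj :: "('d::finite) pt \<Rightarrow> 'd hz" where
  "hproj x = (\<chi> i. case i of Inl k \<Rightarrow> x $ Inl k | Inr k \<Rightarrow> x $ Inr (Inl k))"

definition hrho :: "('d::finite) pt \<Rightarrow> real" where
  "hrho x = ((norm (hproj x)) ^ 4 + (tcoord x)\<^sup>2) powr (1/4)"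

definition heta :: "('d::finite) pt \<Rightarrow> 'd hz" where
  "heta x = (\<chi> i. case i of
      Inl k \<Rightarrow> x $ Inl k * (norm (hproj x))\<^sup>2 + x $ Inr (Inl k) * tcoord x
    | Inr k \<Rightarrow> x $ Inr (Inl k) * (norm (hproj x))\<^sup>2 - x $ Inl k * tcoord x)"

definition hfield :: "('d + 'd) \<Rightarrow> ('d::finite) pt \<Rightarrow> 'd pt" where
  "hfield i x = (case i of
      Inl k \<Rightarrow> axis (Inl k) 1 + (2 * x $ Inr (Inl k)) *\<^sub>R axis (Inr (Inr ())) 1
    | Inr k \<Rightarrow> axis (Inr (Inl k)) 1 - (2 * x $ Inl k) *\<^sub>R axis (Inr (Inr ())) 1)"

definition hderiv :: "('d + 'd) \<Rightarrow> (('d::finite) pt \<Rightarrow> real) \<Rightarrow> 'd pt \<Rightarrow> real" where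
  "hderiv i f x = frechet_derivative f (at x) (hfield i x)"

definition hgrad :: "(('d::finite) pt \<Rightarrow> real) \<Rightarrow> 'd pt \<Rightarrow> 'd hz" where
  "hgrad f x = (\<chi> i. hderiv i f x)"

definition hhess :: "(('d::finite) pt \<Rightarrow> real) \<Rightarrow> 'd pt \<Rightarrow> real ^ ('d + 'd) ^ ('d + 'd)" where
  "hhess f x = (\<chi> i j. hderiv i (hderiv j f) x)"

definition symm :: "real ^ 'n ^ 'n \<Rightarrow> real ^ 'n ^ 'n" where
  "symm Y = (1/2) *\<^sub>R (Y + transpose Y)"

definition pucci_adm :: "real \<Rightarrow> real \<Rightarrow> real ^ ('n::finite) ^ 'n \<Rightarrow> bool" where
  "pucci_adm l L A \<longleftrightarrow> transpose A = A \<and>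
     (\<forall>\<xi>. l * (norm \<xi>)\<^sup>2 \<le> \<xi> \<bullet> (A *v \<xi>) \<and> \<xi> \<bullet> (A *v \<xi>) \<le> L * (norm \<xi>)\<^sup>2)"

definition pucci_plus :: "real \<Rightarrow> real \<Rightarrow> real ^ ('n::finite) ^ 'n \<Rightarrow> real" where
  "pucci_plus l L M = (SUP A \<in> {A. pucci_adm l L A}. trace (- (A ** M)))"

definition pucci_minus :: "real \<Rightarrow> real \<Rightarrow> real ^ ('n::finite) ^ 'n \<Rightarrow> real" where
  "pucci_minus l L M = (INF A \<in> {A. pucci_adm l L A}. trace (- (A ** M)))"

definition C2 :: "(real ^ ('n::finite) \<Rightarrow> real) \<Rightarrow> bool" where
  "C2 f \<longleftrightarrow> (\<exists>g H. (\<forall>x. (f has_derivative (\<lambda>h. g x \<bullet> h)) (at x)) \<and>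
                    (\<forall>x. (g has_derivative (\<lambda>h. H x *v h)) (at x)) \<and>
                    continuous_on UNIV H)"

definition usc :: "('a::topological_space \<Rightarrow> real) \<Rightarrow> bool" where
  "usc u \<longleftrightarrow> (\<forall>t. open {x. u x < t})"

definition lsc :: "('a::topological_space \<Rightarrow> real) \<Rightarrow> bool" where
  "lsc u \<longleftrightarrow> (\<forall>t. open {x. u x > t})"

definition visc_sub ::
  "(('d::finite) pt \<Rightarrow> real \<Rightarrow> 'd hz \<Rightarrow> real ^ ('d + 'd) ^ ('d + 'd) \<Rightarrow> real) \<Rightarrow> ('d pt \<Rightarrow> real) \<Rightarrow> bool" where
  "visc_sub F u \<longleftrightarrow> usc u \<and>
     (\<forall>\<phi> x0. C2 \<phi> \<longrightarrow> (\<exists>e>0. \<forall>y\<in>ball x0 e. u y - \<phi> y \<le> u x0 - \<phi> x0) \<longrightarrow>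
        F x0 (u x0) (hgrad \<phi> x0) (symm (hhess \<phi> x0)) \<le> 0)"

definition visc_super ::
  "(('d::finite) pt \<Rightarrow> real \<Rightarrow> 'd hz \<Rightarrow> real ^ ('d + 'd) ^ ('d + 'd) \<Rightarrow> real) \<Rightarrow> ('d pt \<Rightarrow> real) \<Rightarrow> bool" where
  "visc_super F v \<longleftrightarrow> lsc v \<and>
     (\<forall>\<phi> x0. C2 \<phi> \<longrightarrow> (\<exists>e>0. \<forall>y\<in>ball x0 e. v y - \<phi> y \<ge> v x0 - \<phi> x0) \<longrightarrow>
        F x0 (v x0) (hgrad \<phi> x0) (symm (hhess \<phi> x0)) \<ge> 0)"

end

theory Submission
  imports Defs
begin

text \<open>
  Part (B) is part (A) for \<open>-v\<close>, so everything is about a subsolution \<open>u\<close>.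

  First, \<open>u\<close> attains its supremum. Let \<open>M\<close> be the maximum of \<open>u\<close> on a large gauge ball
  \<open>\<rho> \<le> r\<close>. If \<open>u\<close> exceeded \<open>M\<close> somewhere, the function \<open>M + \<epsilon> log \<rho>\<close>, perturbed by a small
  multiple of \<open>exp (k x\<^sub>i)\<close>, would touch \<open>u\<close> from above at an interior point of an annulus
  \<open>r \<le> \<rho> \<le> R\<close>: on the inner sphere \<open>u \<le> M\<close>, on the outer sphere the growth condition on \<open>u\<close>
  keeps \<open>u\<close> below. The structural condition on \<open>b\<close> and \<open>c\<close> is exactly what makes
  \<open>log \<rho>\<close> a supersolution for large \<open>\<rho>\<close>, so the test inequality fails there.

  Second, the set \<open>F\<close> where \<open>u\<close> equals its maximum is closed. A Hopf-type barrier
  \<open>-exp (-k |x - q|\<^sup>2)\<close> shows that whenever a Euclidean ball \<open>B(q, |z - q|)\<close> misses \<open>F\<close> and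
  \<open>z \<in> F\<close>, every horizontal field \<open>X\<^sub>i(z)\<close> is tangent to its boundary. Since \<open>X\<^sub>i\<close> is
  constant along its own integral lines \<open>x + s X\<^sub>i(x)\<close>, a Gronwall estimate for the squared
  distance to \<open>F\<close> along such a line shows that \<open>F\<close> is invariant under these flows.
  Finally the commutator \<open>[X\<^sub>i, X\<^sub>i\<^sub>+\<^sub>d] = -4 \<partial>\<^sub>t\<close> lets these flows reach every point,
  so \<open>F\<close> is the whole space.
\<close>

definition C2_with ::
  "(real ^ ('n::finite) \<Rightarrow> real) \<Rightarrow> (real ^ 'n \<Rightarrow> real ^ 'n) \<Rightarrow> (real ^ 'n \<Rightarrow> real ^ 'n ^ 'n) \<Rightarrow> bool"
  where
  "C2_with f g H \<longleftrightarrow> (\<forall>x. (f has_derivative (\<lambda>h. g x \<bullet> h)) (at x)) \<and>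
                    (\<forall>x. (g has_derivative (\<lambda>h. H x *v h)) (at x)) \<and>
                    continuous_on UNIV H"

lemma C2_with_imp_C2: "C2_with f g H \<Longrightarrow> C2 f"
  unfolding C2_with_def C2_def by blast

lemma C2_imp_C2_with: "C2 f \<Longrightarrow> \<exists>g H. C2_with f g H"
  unfolding C2_def C2_with_def by blast

lemma C2_with_continuous: assumes "C2_with f g H" shows "continuous_on UNIV f"
proof (rule continuous_at_imp_continuous_on, rule ballI)
  fix x
  have "(f has_derivative (\<lambda>h. g x \<bullet> h)) (at x)" using assms unfolding C2_with_def by blast
  then show "isCont f x" by (rule has_derivative_continuous)
qed

lemma C2_with_continuous_grad: assumes "C2_with f g H" shows "continuous_on UNIV g"
proof (rule continuous_at_imp_continuous_on, rule ballI)
  fix x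
  have "(g has_derivative (\<lambda>h. H x *v h)) (at x)" using assms unfolding C2_with_def by blast
  then show "isCont g x" by (rule has_derivative_continuous)
qed

definition outer :: "real ^ ('n::finite) \<Rightarrow> real ^ 'n \<Rightarrow> real ^ 'n ^ 'n" where
  "outer u v = (\<chi> i j. u $ i * v $ j)"

lemma outer_mult_vector: "outer u v *v h = (v \<bullet> h) *\<^sub>R u"
proof -
  have "(\<Sum>j\<in>UNIV. u $ i * (v $ j * h $ j)) = (\<Sum>j\<in>UNIV. v $ j * h $ j) * u $ i" for i
    by (simp add: sum_distrib_left[symmetric] mult.commute)
  then show ?thesis by (simp add: vec_eq_iff outer_def matrix_vector_mult_def inner_vec_def mult.assoc)
qed

lemma continuous_on_outer[continuous_intros]:
  "continuous_on S u \<Longrightarrow> continuous_on S v \<Longrightarrow> continuous_on S (\<lambda>x. outer (u x) (v x))"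
  unfolding outer_def by (intro continuous_intros)

lemma matrix_vector_mult_scaleR_left: "(c *\<^sub>R M) *v h = c *\<^sub>R (M *v (h :: real ^ 'n::finite))"
  by (simp add: vec_eq_iff matrix_vector_mult_def sum_distrib_left mult.assoc)

lemma matrix_vector_mult_sum_left:
  "finite S \<Longrightarrow> (\<Sum>j\<in>S. M j) *v h = (\<Sum>j\<in>S. M j *v (h :: real ^ 'n::finite))"
  by (induction S rule: finite_induct) (auto simp: matrix_vector_mult_add_rdistrib)

lemma C2_with_const: "C2_with (\<lambda>_. a) (\<lambda>_. 0) (\<lambda>_. 0)"
proof -
  have "((\<lambda>_. a) has_derivative (\<lambda>h. 0 \<bullet> h)) (at x)" for x :: "real^'n::finite"
    using has_derivative_const[of a "at x"] by simp
  moreover have "((\<lambda>_. 0::real^'n) has_derivative (\<lambda>h. (0::real^'n^'n) *v h)) (at x)" for x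
    using has_derivative_const[of "0::real^'n" "at x"] by simp
  ultimately show ?thesis unfolding C2_with_def using continuous_on_const by blast
qed

lemma C2_with_inner: fixes a :: "real^'n::finite" shows "C2_with (\<lambda>x. a \<bullet> x) (\<lambda>_. a) (\<lambda>_. 0)"
proof -
  have "((\<lambda>x. a \<bullet> x) has_derivative (\<lambda>h. a \<bullet> h)) (at x)" for x :: "real^'n"
    by (rule bounded_linear_imp_has_derivative) (rule bounded_linear_inner_right)
  moreover have "((\<lambda>_. a) has_derivative (\<lambda>h. (0::real^'n^'n) *v h)) (at x)" for x :: "real^'n"
    using has_derivative_const[of a "at x"] by simp
  ultimately show ?thesis unfolding C2_with_def using continuous_on_const by blast
qed

lemma C2_with_add:
  assumes "C2_with f1 g1 H1" "C2_with f2 g2 H2"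
  shows "C2_with (\<lambda>x. f1 x + f2 x) (\<lambda>x. g1 x + g2 x) (\<lambda>x. H1 x + H2 x)"
proof -
  have d: "(f1 has_derivative (\<lambda>h. g1 x \<bullet> h)) (at x)" "(g1 has_derivative (\<lambda>h. H1 x *v h)) (at x)"
    "(f2 has_derivative (\<lambda>h. g2 x \<bullet> h)) (at x)" "(g2 has_derivative (\<lambda>h. H2 x *v h)) (at x)" for x
    using assms unfolding C2_with_def by blast+
  have "((\<lambda>x. f1 x + f2 x) has_derivative (\<lambda>h. (g1 x + g2 x) \<bullet> h)) (at x)" for x
    using has_derivative_add[OF d(1) d(3)] by (simp add: inner_add_left)
  moreover have "((\<lambda>x. g1 x + g2 x) has_derivative (\<lambda>h. (H1 x + H2 x) *v h)) (at x)" for x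
    using has_derivative_add[OF d(2) d(4)] by (simp add: matrix_vector_mult_add_rdistrib)
  moreover have "continuous_on UNIV (\<lambda>x. H1 x + H2 x)"
    using assms unfolding C2_with_def by (intro continuous_on_add) auto
  ultimately show ?thesis unfolding C2_with_def by blast
qed

lemma C2_with_scale:
  assumes "C2_with f g H"
  shows "C2_with (\<lambda>x. c * f x) (\<lambda>x. c *\<^sub>R g x) (\<lambda>x. c *\<^sub>R H x)"
proof -
  have d: "(f has_derivative (\<lambda>h. g x \<bullet> h)) (at x)" "(g has_derivative (\<lambda>h. H x *v h)) (at x)" for x
    using assms unfolding C2_with_def by blast+
  have "((\<lambda>x. c * f x) has_derivative (\<lambda>h. (c *\<^sub>R g x) \<bullet> h)) (at x)" for x
    using has_derivative_mult_right[OF d(1), of c] by simp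
  moreover have "((\<lambda>x. c *\<^sub>R g x) has_derivative (\<lambda>h. (c *\<^sub>R H x) *v h)) (at x)" for x
    using has_derivative_scaleR_right[OF d(2), of c] by (simp add: matrix_vector_mult_scaleR_left)
  moreover have "continuous_on UNIV (\<lambda>x. c *\<^sub>R H x)"
    using assms unfolding C2_with_def by (intro continuous_on_scaleR continuous_on_const) auto
  ultimately show ?thesis unfolding C2_with_def by blast
qed

lemma C2_with_uminus: "C2_with f g H \<Longrightarrow> C2_with (\<lambda>x. - f x) (\<lambda>x. - g x) (\<lambda>x. - H x)"
  using C2_with_scale[of f g H "-1"] by simp

lemma C2_with_sum:
  assumes "finite S" "\<And>j. j \<in> S \<Longrightarrow> C2_with (f j) (g j) (H j)"
  shows "C2_with (\<lambda>x. \<Sum>j\<in>S. f j x) (\<lambda>x. \<Sum>j\<in>S. g j x) (\<lambda>x. \<Sum>j\<in>S. H j x)"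
  using assms
proof (induction S rule: finite_induct)
  case empty
  then show ?case using C2_with_const[of 0] by simp
next
  case (insert a F)
  then show ?case using C2_with_add[of "f a" "g a" "H a"] by simp
qed

lemma C2_with_compose:
  assumes G1: "\<And>s. (G has_real_derivative G1 s) (at s)"
    and G2: "\<And>s. (G1 has_real_derivative G2 s) (at s)"
    and G2c: "continuous_on UNIV G2"
    and f: "C2_with f g H"
  shows "C2_with (\<lambda>x. G (f x)) (\<lambda>x. G1 (f x) *\<^sub>R g x)
           (\<lambda>x. G2 (f x) *\<^sub>R outer (g x) (g x) + G1 (f x) *\<^sub>R H x)"
proof -
  have fd: "\<And>x. (f has_derivative (\<lambda>h. g x \<bullet> h)) (at x)"
    and gd: "\<And>x. (g has_derivative (\<lambda>h. H x *v h)) (at x)"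
    and Hc: "continuous_on UNIV H" using f unfolding C2_with_def by auto
  have fc: "continuous_on UNIV f" and gc: "continuous_on UNIV g"
    using C2_with_continuous C2_with_continuous_grad f by auto
  have G1c: "continuous_on UNIV G1"
    by (metis G2 DERIV_isCont continuous_at_imp_continuous_on)
  have "((\<lambda>x. G (f x)) has_derivative (\<lambda>h. (G1 (f x) *\<^sub>R g x) \<bullet> h)) (at x)" for x
    using has_derivative_compose[OF fd has_field_derivative_imp_has_derivative[OF G1]] by simp
  moreover have "((\<lambda>x. G1 (f x) *\<^sub>R g x) has_derivative
      (\<lambda>h. (G2 (f x) *\<^sub>R outer (g x) (g x) + G1 (f x) *\<^sub>R H x) *v h)) (at x)" for x
    using has_derivative_scaleR[OF has_derivative_compose[OF fd has_field_derivative_imp_has_derivative[OF G2]] gd]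
    by (simp add: matrix_vector_mult_add_rdistrib matrix_vector_mult_scaleR_left outer_mult_vector
        add.commute)
  moreover have "continuous_on UNIV (\<lambda>x. G2 (f x) *\<^sub>R outer (g x) (g x) + G1 (f x) *\<^sub>R H x)"
    by (intro continuous_intros continuous_on_compose2[OF G2c fc] continuous_on_compose2[OF G1c fc] gc Hc)
      auto
  ultimately show ?thesis unfolding C2_with_def by blast
qed

lemma C2_with_inner_square:
  fixes a :: "real^'n::finite"
  shows "C2_with (\<lambda>x. (a \<bullet> x)^2) (\<lambda>x. (2 * (a \<bullet> x)) *\<^sub>R a) (\<lambda>_. 2 *\<^sub>R outer a a)"
proof -
  have d1: "((\<lambda>s::real. s^2) has_real_derivative 2 * s) (at s)" for s
    by (auto intro!: derivative_eq_intros)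
  have d2: "((\<lambda>s::real. 2 * s) has_real_derivative 2) (at s)" for s
    by (auto intro!: derivative_eq_intros)
  from C2_with_compose[OF d1 d2 continuous_on_const C2_with_inner[of a]] show ?thesis by simp
qed

lemma C2_with_exp_inner:
  fixes a :: "real^'n::finite"
  shows "C2_with (\<lambda>x. exp (k * (a \<bullet> x))) (\<lambda>x. (k * exp (k * (a \<bullet> x))) *\<^sub>R a)
           (\<lambda>x. (k * k * exp (k * (a \<bullet> x))) *\<^sub>R outer a a)"
proof -
  have d1: "((\<lambda>s. exp (k * s)) has_real_derivative k * exp (k * s)) (at s)" for s
    by (auto intro!: derivative_eq_intros)
  have d2: "((\<lambda>s. k * exp (k * s)) has_real_derivative k * k * exp (k * s)) (at s)" for s
    by (auto intro!: derivative_eq_intros)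
  show ?thesis using C2_with_compose[OF d1 d2 _ C2_with_inner[of a]] by (simp add: continuous_intros)
qed

lemma C2_with_dist2:
  "C2_with (\<lambda>x. (x - q) \<bullet> (x - q)) (\<lambda>x. 2 *\<^sub>R (x - q)) (\<lambda>_. 2 *\<^sub>R mat 1 :: real^'n::finite^'n)"
proof -
  have d0: "((\<lambda>x::real^'n. x - q) has_derivative (\<lambda>h. h)) (at x)" for x
    by (auto intro!: derivative_eq_intros)
  have "((\<lambda>x. (x - q) \<bullet> (x - q)) has_derivative (\<lambda>h. (2 *\<^sub>R (x - q)) \<bullet> h)) (at x)" for x
    using has_derivative_inner[OF d0 d0, of x] by (simp add: inner_commute algebra_simps)
  moreover have "((\<lambda>x::real^'n. 2 *\<^sub>R (x - q)) has_derivative (\<lambda>h. (2 *\<^sub>R mat 1 :: real^'n^'n) *v h)) (at x)"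
    for x
    using has_derivative_scaleR_right[OF d0, of 2] by (simp add: matrix_vector_mult_scaleR_left)
  ultimately show ?thesis unfolding C2_with_def using continuous_on_const by blast
qed

definition taxis :: "('d::finite) pt" where "taxis = axis (Inr (Inr ())) 1"

definition hfield_diff :: "('d + 'd) \<Rightarrow> ('d::finite) pt \<Rightarrow> 'd pt" where
  "hfield_diff i h = (case i of Inl k \<Rightarrow> (2 * h $ Inr (Inl k)) *\<^sub>R taxis
                          | Inr k \<Rightarrow> - ((2 * h $ Inl k) *\<^sub>R taxis))"

lemma has_derivative_vec_nth[derivative_intros]:
  "((\<lambda>x. x $ i) has_derivative (\<lambda>x. x $ i)) (at x within S)"
  by (rule bounded_linear_imp_has_derivative) (rule bounded_linear_vec_nth)

lemma hfield_has_derivative: "(hfield i has_derivative hfield_diff i) (at x)"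
proof (cases i)
  case (Inl k)
  show ?thesis unfolding hfield_def hfield_diff_def Inl taxis_def
    by (auto intro!: derivative_eq_intros bounded_linear_vec_nth)
next
  case (Inr k)
  show ?thesis unfolding hfield_def hfield_diff_def Inr taxis_def
    by (auto intro!: derivative_eq_intros bounded_linear_vec_nth)
qed

lemma continuous_hfield: "continuous_on UNIV (hfield i :: ('d::finite) pt \<Rightarrow> 'd pt)"
  by (rule continuous_at_imp_continuous_on)
    (use hfield_has_derivative has_derivative_continuous in blast)

lemma continuous_hfield_diff_hfield:
  "continuous_on UNIV (\<lambda>x::('d::finite) pt. hfield_diff j (hfield i x))"
  using hfield_has_derivative has_derivative_bounded_linear
  by (intro continuous_on_compose2[OF linear_continuous_on continuous_hfield]) auto

lemma hderiv_C2_with: assumes "C2_with f g H" shows "hderiv i f x = g x \<bullet> hfield i x"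
proof -
  have "(f has_derivative (\<lambda>h. g x \<bullet> h)) (at x)" using assms unfolding C2_with_def by blast
  from frechet_derivative_at[OF this] have "frechet_derivative f (at x) = (\<lambda>h. g x \<bullet> h)" by simp
  then show ?thesis unfolding hderiv_def by simp
qed

lemma hderiv2_C2_with:
  assumes "C2_with f g H"
  shows "hderiv i (hderiv j f) x = (H x *v hfield i x) \<bullet> hfield j x + g x \<bullet> hfield_diff j (hfield i x)"
proof -
  have e: "hderiv j f = (\<lambda>y. g y \<bullet> hfield j y)" using hderiv_C2_with[OF assms] by blast
  have "(g has_derivative (\<lambda>h. H x *v h)) (at x)" using assms unfolding C2_with_def by blast
  from has_derivative_inner[OF this hfield_has_derivative]
  have "((\<lambda>y. g y \<bullet> hfield j y) has_derivative
          (\<lambda>h. g x \<bullet> hfield_diff j h + (H x *v h) \<bullet> hfield j x)) (at x)" .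
  from frechet_derivative_at[OF this]
  have "frechet_derivative (\<lambda>y. g y \<bullet> hfield j y) (at x)
        = (\<lambda>h. g x \<bullet> hfield_diff j h + (H x *v h) \<bullet> hfield j x)" by simp
  then show ?thesis unfolding hderiv_def e by simp
qed

definition hgrad_of :: "(('d::finite) pt \<Rightarrow> 'd pt) \<Rightarrow> 'd pt \<Rightarrow> 'd hz" where
  "hgrad_of g x = (\<chi> i. g x \<bullet> hfield i x)"

definition hhess_of ::
  "(('d::finite) pt \<Rightarrow> 'd pt) \<Rightarrow> ('d pt \<Rightarrow> real^('d+'d+unit)^('d+'d+unit)) \<Rightarrow> 'd pt \<Rightarrow> real^('d+'d)^('d+'d)"
  where
  "hhess_of g H x = (\<chi> i j. (H x *v hfield i x) \<bullet> hfield j x + g x \<bullet> hfield_diff j (hfield i x))"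

lemma hgrad_C2_with: "C2_with f g H \<Longrightarrow> hgrad f x = hgrad_of g x"
  unfolding hgrad_def hgrad_of_def using hderiv_C2_with[of f g H] by simp

lemma hhess_C2_with: "C2_with f g H \<Longrightarrow> hhess f x = hhess_of g H x"
  unfolding hhess_def hhess_of_def using hderiv2_C2_with[of f g H] by simp

lemma hgrad_of_nth: "hgrad_of g x $ i = g x \<bullet> hfield i x"
  unfolding hgrad_of_def by simp

lemma hhess_of_nth:
  "hhess_of g H x $ i $ j = (H x *v hfield i x) \<bullet> hfield j x + g x \<bullet> hfield_diff j (hfield i x)"
  unfolding hhess_of_def by simp

lemma hgrad_of_add: "hgrad_of (\<lambda>x. g1 x + g2 x) x $ i = hgrad_of g1 x $ i + hgrad_of g2 x $ i"
  by (simp add: hgrad_of_nth inner_add_left)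

lemma hhess_of_add:
  "hhess_of (\<lambda>x. g1 x + g2 x) (\<lambda>x. H1 x + H2 x) x $ i $ j = hhess_of g1 H1 x $ i $ j + hhess_of g2 H2 x $ i $ j"
  by (simp add: hhess_of_nth inner_add_left matrix_vector_mult_add_rdistrib)

lemma hgrad_of_scale: "hgrad_of (\<lambda>x. c *\<^sub>R g x) x $ i = c * hgrad_of g x $ i"
  by (simp add: hgrad_of_nth)

lemma hhess_of_scale: "hhess_of (\<lambda>x. c *\<^sub>R g x) (\<lambda>x. c *\<^sub>R H x) x $ i $ j = c * hhess_of g H x $ i $ j"
  by (simp add: hhess_of_nth matrix_vector_mult_scaleR_left algebra_simps)

lemma hgrad_of_compose: "hgrad_of (\<lambda>x. G1 (f x) *\<^sub>R g x) x $ i = G1 (f x) * hgrad_of g x $ i"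
  by (simp add: hgrad_of_nth)

lemma hhess_of_compose:
  "hhess_of (\<lambda>x. G1 (f x) *\<^sub>R g x) (\<lambda>x. G2 (f x) *\<^sub>R outer (g x) (g x) + G1 (f x) *\<^sub>R H x) x $ i $ j
   = G2 (f x) * (hgrad_of g x $ i * hgrad_of g x $ j) + G1 (f x) * hhess_of g H x $ i $ j"
  by (simp add: hhess_of_nth hgrad_of_nth matrix_vector_mult_add_rdistrib matrix_vector_mult_scaleR_left
      outer_mult_vector inner_add_left algebra_simps)

definition hidx :: "('d::finite) + 'd \<Rightarrow> 'd + 'd + unit" where
  "hidx i = (case i of Inl k \<Rightarrow> Inl k | Inr k \<Rightarrow> Inr (Inl k))"

definition jrot :: "('d::finite) hz \<Rightarrow> 'd hz" where
  "jrot v = (\<chi> i. case i of Inl k \<Rightarrow> v $ Inr k | Inr k \<Rightarrow> - v $ Inl k)"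

definition jmat :: "('d::finite) + 'd \<Rightarrow> 'd + 'd \<Rightarrow> real" where
  "jmat i j = (case j of Inl k \<Rightarrow> (if i = Inr k then 1 else 0)
                       | Inr k \<Rightarrow> (if i = Inl k then -1 else 0))"

lemma axis_one_inner: "axis k 1 \<bullet> v = v $ k"
  by (simp add: inner_axis')

lemma hfield_hidx: "hfield i x $ hidx j = (if i = j then 1 else 0)"
  by (cases i; cases j) (auto simp: hfield_def hidx_def axis_def)

lemma hfield_tcoord: "hfield i x $ Inr (Inr ()) = 2 * jrot (hproj x) $ i"
  by (cases i) (auto simp: hfield_def jrot_def hproj_def axis_def)

lemma hfield_diff_hidx: "hfield_diff j h $ hidx i = 0"
  by (cases i; cases j) (auto simp: hfield_diff_def hidx_def axis_def taxis_def)

lemma hfield_diff_tcoord: "hfield_diff j (hfield i x) $ Inr (Inr ()) = 2 * jmat i j"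
  by (cases i; cases j) (auto simp: hfield_diff_def hfield_def jmat_def axis_def taxis_def)

lemma hproj_nth: "hproj x $ i = x $ hidx i"
  by (cases i) (auto simp: hproj_def hidx_def)

definition hnorm2 :: "('d::finite) pt \<Rightarrow> real" where
  "hnorm2 x = (\<Sum>j\<in>UNIV. (axis (hidx j) 1 \<bullet> x)^2)"

definition hnorm2_grad :: "('d::finite) pt \<Rightarrow> 'd pt" where
  "hnorm2_grad x = (\<Sum>j\<in>UNIV. (2 * (axis (hidx j) 1 \<bullet> x)) *\<^sub>R axis (hidx j) 1)"

definition hnorm2_hess :: "('d::finite) pt \<Rightarrow> real^('d+'d+unit)^('d+'d+unit)" where
  "hnorm2_hess x = (\<Sum>j\<in>UNIV. 2 *\<^sub>R outer (axis (hidx j) 1) (axis (hidx j) 1))"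

lemma C2_with_hnorm2: "C2_with hnorm2 hnorm2_grad hnorm2_hess"
  unfolding hnorm2_def hnorm2_grad_def hnorm2_hess_def
  by (rule C2_with_sum[where f="\<lambda>j x. (axis (hidx j) 1 \<bullet> x)^2"]) (auto intro: C2_with_inner_square)

lemma hnorm2_eq: "hnorm2 x = (norm (hproj x))^2"
proof -
  have "hnorm2 x = (\<Sum>j\<in>UNIV. (x $ hidx j)^2)" by (simp add: hnorm2_def axis_one_inner)
  also have "\<dots> = hproj x \<bullet> hproj x" by (simp add: inner_vec_def hproj_nth power2_eq_square)
  finally show ?thesis by (simp add: power2_norm_eq_inner)
qed

lemma hgrad_of_hnorm2: "hgrad_of hnorm2_grad x $ i = 2 * hproj x $ i"
proof -
  have "hgrad_of hnorm2_grad x $ i = (\<Sum>j\<in>UNIV. 2 * x $ hidx j * (if i = j then 1 else 0))"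
    unfolding hgrad_of_nth hnorm2_grad_def by (simp add: inner_sum_left axis_one_inner hfield_hidx)
  also have "\<dots> = 2 * x $ hidx i" by (simp add: if_distrib cong: if_cong)
  finally show ?thesis by (simp add: hproj_nth)
qed

lemma hhess_of_hnorm2: "hhess_of hnorm2_grad hnorm2_hess x $ i $ j = (if i = j then 2 else 0)"
proof -
  have "hhess_of hnorm2_grad hnorm2_hess x $ i $ j
        = (\<Sum>k\<in>UNIV. 2 * ((if i = k then 1 else 0) * (if j = k then 1 else 0)))"
    unfolding hhess_of_nth hnorm2_grad_def hnorm2_hess_def
    by (simp add: inner_sum_left matrix_vector_mult_sum_left axis_one_inner hfield_hidx hfield_diff_hidx
        matrix_vector_mult_scaleR_left outer_mult_vector mult.assoc)
  also have "\<dots> = (\<Sum>k\<in>UNIV. (if k = j then (if i = j then 2 else 0) else 0))"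
    by (rule sum.cong) auto
  also have "\<dots> = (if i = j then 2 else 0)" by simp
  finally show ?thesis .
qed

definition rho4 :: "('d::finite) pt \<Rightarrow> real" where
  "rho4 x = (hnorm2 x)^2 + (taxis \<bullet> x)^2"

definition rho4_grad :: "('d::finite) pt \<Rightarrow> 'd pt" where
  "rho4_grad x = (2 * hnorm2 x) *\<^sub>R hnorm2_grad x + (2 * (taxis \<bullet> x)) *\<^sub>R taxis"

definition rho4_hess :: "('d::finite) pt \<Rightarrow> real^('d+'d+unit)^('d+'d+unit)" where
  "rho4_hess x = (2 *\<^sub>R outer (hnorm2_grad x) (hnorm2_grad x) + (2 * hnorm2 x) *\<^sub>R hnorm2_hess x)
                 + 2 *\<^sub>R outer taxis taxis"

lemma C2_with_rho4: "C2_with rho4 rho4_grad rho4_hess"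
proof -
  have d1: "((\<lambda>s::real. s^2) has_real_derivative 2 * s) (at s)" for s
    by (auto intro!: derivative_eq_intros)
  have d2: "((\<lambda>s::real. 2 * s) has_real_derivative 2) (at s)" for s
    by (auto intro!: derivative_eq_intros)
  have "C2_with (\<lambda>x. (hnorm2 x)^2) (\<lambda>x. (2 * hnorm2 x) *\<^sub>R hnorm2_grad x)
      (\<lambda>x. 2 *\<^sub>R outer (hnorm2_grad x) (hnorm2_grad x) + (2 * hnorm2 x) *\<^sub>R hnorm2_hess x)"
    using C2_with_compose[OF d1 d2 continuous_on_const C2_with_hnorm2] by simp
  from C2_with_add[OF this C2_with_inner_square[of taxis]] show ?thesis
    unfolding rho4_def rho4_grad_def rho4_hess_def by simp
qed

lemma inner_taxis: "taxis \<bullet> x = x $ Inr (Inr ())"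
  by (simp add: taxis_def axis_one_inner)

lemma rho4_eq: "rho4 x = (norm (hproj x))^4 + (tcoord x)^2"
  by (simp add: rho4_def hnorm2_eq inner_taxis tcoord_def power_mult[symmetric])

lemma heta_nth: "heta x $ i = hnorm2 x * hproj x $ i + tcoord x * jrot (hproj x) $ i"
  by (cases i) (auto simp: heta_def hnorm2_eq hproj_def jrot_def tcoord_def algebra_simps)

lemma hgrad_of_rho4: "hgrad_of rho4_grad x $ i = 4 * heta x $ i"
proof -
  have "hgrad_of rho4_grad x $ i
        = 2 * hnorm2 x * (2 * hproj x $ i) + 2 * (taxis \<bullet> x) * (taxis \<bullet> hfield i x)"
    unfolding rho4_grad_def hgrad_of_add hgrad_of_scale using hgrad_of_hnorm2[of x i]
    by (simp add: hgrad_of_nth)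
  also have "\<dots> = 4 * (hnorm2 x * hproj x $ i + tcoord x * jrot (hproj x) $ i)"
    by (simp add: inner_taxis hfield_tcoord tcoord_def algebra_simps)
  finally show ?thesis by (simp add: heta_nth)
qed

lemma hhess_of_rho4:
  "hhess_of rho4_grad rho4_hess x $ i $ j
   = 8 * (hproj x $ i * hproj x $ j) + 4 * hnorm2 x * (if i = j then 1 else 0)
     + 8 * (jrot (hproj x) $ i * jrot (hproj x) $ j) + 4 * tcoord x * jmat i j"
proof -
  let ?g1 = "\<lambda>x. (2 * hnorm2 x) *\<^sub>R hnorm2_grad x"
  let ?H1 = "\<lambda>x. 2 *\<^sub>R outer (hnorm2_grad x) (hnorm2_grad x) + (2 * hnorm2 x) *\<^sub>R hnorm2_hess x"
  let ?g2 = "\<lambda>x. (2 * (taxis \<bullet> x)) *\<^sub>R taxis"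
  let ?H2 = "\<lambda>_. 2 *\<^sub>R outer taxis taxis"
  have e1: "hhess_of ?g1 ?H1 x $ i $ j = 2 * (hgrad_of hnorm2_grad x $ i * hgrad_of hnorm2_grad x $ j)
                                       + 2 * hnorm2 x * hhess_of hnorm2_grad hnorm2_hess x $ i $ j"
    using hhess_of_compose[of "\<lambda>s. 2 * s" hnorm2 hnorm2_grad "\<lambda>s. 2" hnorm2_hess x i j] by simp
  have e2: "hhess_of ?g2 ?H2 x $ i $ j = 2 * ((taxis \<bullet> hfield i x) * (taxis \<bullet> hfield j x))
                                       + 2 * (taxis \<bullet> x) * (taxis \<bullet> hfield_diff j (hfield i x))"
    by (simp add: hhess_of_nth matrix_vector_mult_scaleR_left outer_mult_vector)
  have "hhess_of rho4_grad rho4_hess x $ i $ j = hhess_of ?g1 ?H1 x $ i $ j + hhess_of ?g2 ?H2 x $ i $ j"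
    unfolding rho4_grad_def rho4_hess_def by (rule hhess_of_add)
  then show ?thesis
    unfolding e1 e2 hgrad_of_hnorm2 hhess_of_hnorm2
    by (simp add: inner_taxis hfield_tcoord hfield_diff_tcoord tcoord_def algebra_simps)
qed

section \<open>Quadratic forms of admissible Pucci matrices\<close>

definition qform :: "real^'n^'n \<Rightarrow> real^('n::finite) \<Rightarrow> real^'n \<Rightarrow> real" where
  "qform A u v = u \<bullet> (A *v v)"

definition frob :: "real^('n::finite)^'n \<Rightarrow> ('n \<Rightarrow> 'n \<Rightarrow> real) \<Rightarrow> real" where
  "frob A X = (\<Sum>i\<in>UNIV. \<Sum>j\<in>UNIV. A$i$j * X i j)"

lemma symmetric_matrix_entry: "transpose A = A \<Longrightarrow> A$i$j = A$j$i"
  by (metis transpose_def vec_lambda_beta)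

lemma qform_sum: "qform A u v = (\<Sum>i\<in>UNIV. \<Sum>j\<in>UNIV. A$i$j * u$i * v$j)"
  unfolding qform_def inner_vec_def matrix_vector_mult_def
  by (simp add: sum_distrib_left mult_ac)

lemma qform_add_left: "qform A (u + w) v = qform A u v + qform A w v"
  by (simp add: qform_def inner_add_left)
lemma qform_add_right: "qform A u (v + w) = qform A u v + qform A u w"
  by (simp add: qform_def matrix_vector_right_distrib inner_add_right)
lemma qform_diff_left: "qform A (u - w) v = qform A u v - qform A w v"
  by (simp add: qform_def inner_diff_left)
lemma qform_diff_right: "qform A u (v - w) = qform A u v - qform A u w"
  by (simp add: qform_def matrix_vector_mult_diff_distrib inner_diff_right)
lemma qform_scale_left: "qform A (c *\<^sub>R u) v = c * qform A u v"
  by (simp add: qform_def)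
lemma qform_scale_right: "qform A u (c *\<^sub>R v) = c * qform A u v"
  by (simp add: qform_def matrix_vector_mult_scaleR)

lemma qform_axis: "qform A (axis i 1) (axis j 1) = A$i$j"
  by (simp add: qform_def inner_axis' matrix_vector_mult_basis column_def)

lemma qform_axis_left: "qform A (axis k 1) w = (A *v w) $ k"
  by (simp add: qform_def inner_axis')

lemma qform_sym: assumes "transpose A = A" shows "qform A u v = qform A v u"
proof -
  have "qform A u v = (\<Sum>i\<in>UNIV. \<Sum>j\<in>UNIV. A$j$i * v$j * u$i)" unfolding qform_sum
    by (intro sum.cong refl) (simp add: symmetric_matrix_entry[OF assms] mult.commute mult.left_commute)
  also have "\<dots> = qform A v u" unfolding qform_sum by (rule sum.swap)
  finally show ?thesis .
qed

lemma pucci_adm_symmetric: "pucci_adm l L A \<Longrightarrow> transpose A = A"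
  by (simp add: pucci_adm_def)

lemma pucci_adm_lower: "pucci_adm l L A \<Longrightarrow> l * (norm u)^2 \<le> qform A u u"
  by (simp add: pucci_adm_def qform_def)

lemma pucci_adm_upper: "pucci_adm l L A \<Longrightarrow> qform A u u \<le> L * (norm u)^2"
  by (simp add: pucci_adm_def qform_def)

lemma pucci_adm_diag_ge: "pucci_adm l L A \<Longrightarrow> l \<le> A$i$i"
  using pucci_adm_lower[of l L A "axis i 1"] by (simp add: qform_axis)

lemma pucci_adm_entry_bound:
  assumes adm: "pucci_adm l L A" and lpos: "0 < l"
  shows "\<bar>A$i$j\<bar> \<le> L"
proof (cases "i = j")
  case True
  have "A$i$i \<le> L" using pucci_adm_upper[OF adm, of "axis i 1"] by (simp add: qform_axis)
  moreover have "l \<le> A$i$i" by (rule pucci_adm_diag_ge[OF adm])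
  ultimately show ?thesis using True lpos by simp
next
  case False
  have sym: "A$j$i = A$i$j" by (rule symmetric_matrix_entry[OF pucci_adm_symmetric[OF adm]])
  have n: "(norm (axis i 1 + axis j (1::real) :: real^'a))^2 = 2"
          "(norm (axis i 1 - axis j (1::real) :: real^'a))^2 = 2"
    using False by (simp_all add: power2_norm_eq_inner inner_add inner_diff inner_axis_axis)
  have "qform A (axis i 1 + axis j 1) (axis i 1 + axis j 1) = A$i$i + A$j$j + 2 * A$i$j"
       "qform A (axis i 1 - axis j 1) (axis i 1 - axis j 1) = A$i$i + A$j$j - 2 * A$i$j"
    by (simp_all add: qform_add_left qform_add_right qform_diff_left qform_diff_right qform_axis sym)
  then have "A$i$i + A$j$j + 2 * A$i$j \<le> 2 * L" "A$i$i + A$j$j - 2 * A$i$j \<le> 2 * L"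
    using pucci_adm_upper[OF adm, of "axis i 1 + axis j 1"] pucci_adm_upper[OF adm, of "axis i 1 - axis j 1"] n
    by simp_all
  moreover have "l \<le> A$i$i" "l \<le> A$j$j" by (rule pucci_adm_diag_ge[OF adm])+
  ultimately show ?thesis using lpos by linarith
qed

lemma pucci_adm_scaled_id:
  assumes "0 < l" "l \<le> L" shows "pucci_adm l L (l *\<^sub>R mat 1 :: real^'n::finite^'n)"
proof -
  have t: "transpose (l *\<^sub>R mat 1 :: real^'n^'n) = l *\<^sub>R mat 1"
    by (simp add: transpose_def mat_def vec_eq_iff)
  have q: "\<xi> \<bullet> ((l *\<^sub>R mat 1 :: real^'n^'n) *v \<xi>) = l * (norm \<xi>)^2" for \<xi> :: "real^'n"
    by (simp add: matrix_vector_mult_scaleR_left power2_norm_eq_inner)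
  have "l * (norm \<xi>)^2 \<le> L * (norm \<xi>)^2" for \<xi> :: "real^'n"
    using assms by (intro mult_right_mono) auto
  then show ?thesis unfolding pucci_adm_def using t q by simp
qed

lemma pucci_minus_greatest:
  assumes "0 < l" "l \<le> L" "\<And>A. pucci_adm l L A \<Longrightarrow> \<beta> \<le> trace (- (A ** X))"
  shows "\<beta> \<le> pucci_minus l L X"
  unfolding pucci_minus_def
proof (rule cINF_greatest)
  show "{A. pucci_adm l L A} \<noteq> {}" using pucci_adm_scaled_id[OF assms(1,2)] by blast
qed (use assms(3) in auto)

lemma trace_uminus: "trace (- M) = - trace (M::real^'n::finite^'n)"
  by (simp add: trace_def sum_negf)

lemma trace_mult_symm:
  assumes "transpose A = A"
  shows "trace (A ** symm X) = frob A (\<lambda>i j. X$i$j)"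
proof -
  have e: "(symm X)$k$i = (X$k$i + X$i$k) / 2" for k i
    by (simp add: symm_def transpose_def)
  have "trace (A ** symm X) = (\<Sum>i\<in>UNIV. \<Sum>k\<in>UNIV. A$i$k * X$k$i / 2 + A$i$k * X$i$k / 2)"
    by (simp add: trace_def matrix_matrix_mult_def e add_divide_distrib distrib_left)
  also have "\<dots> = (\<Sum>i\<in>UNIV. \<Sum>k\<in>UNIV. A$i$k * X$k$i) / 2 + (\<Sum>i\<in>UNIV. \<Sum>k\<in>UNIV. A$i$k * X$i$k) / 2"
    by (simp add: sum.distrib sum_divide_distrib)
  also have "(\<Sum>i\<in>UNIV. \<Sum>k\<in>UNIV. A$i$k * X$k$i) = (\<Sum>k\<in>UNIV. \<Sum>i\<in>UNIV. A$k$i * X$k$i)"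
    by (subst sum.swap) (simp add: symmetric_matrix_entry[OF assms])
  finally show ?thesis by (simp add: frob_def)
qed

lemma frob_add: "frob A (\<lambda>i j. X i j + Y i j) = frob A X + frob A Y"
  by (simp add: frob_def distrib_left sum.distrib)

lemma frob_scale: "frob A (\<lambda>i j. c * X i j) = c * frob A X"
  by (simp add: frob_def sum_distrib_left mult_ac)

lemma frob_outer: "frob A (\<lambda>i j. u$i * v$j) = qform A u v"
  by (simp add: frob_def qform_sum mult.assoc)

lemma frob_delta: "frob A (\<lambda>i j. if i = j then 1 else 0) = trace A"
  by (simp add: frob_def trace_def if_distrib cong: if_cong)

lemma frob_diag_entry: "frob A (\<lambda>i j. (if i = k then 1 else 0) * (if j = k then 1 else 0)) = A$k$k"
proof -
  have "A$i$j * ((if i = k then 1 else 0) * (if j = k then 1 else 0))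
        = (if i = k then (if j = k then A$i$j else 0) else 0)" for i j
    by simp
  moreover have "(\<Sum>j\<in>UNIV. if i = k then (if j = k then A$i$j else 0) else 0) = (if i = k then A$i$k else 0)" for i
    by (cases "i = k") simp_all
  ultimately show ?thesis by (simp add: frob_def)
qed

lemma frob_bound:
  assumes adm: "pucci_adm l L A" and lpos: "0 < l"
  shows "\<bar>frob A X\<bar> \<le> L * (\<Sum>i\<in>UNIV. \<Sum>j\<in>UNIV. \<bar>X i j\<bar>)"
proof -
  have "\<bar>frob A X\<bar> \<le> (\<Sum>i\<in>UNIV. \<bar>\<Sum>j\<in>UNIV. A$i$j * X i j\<bar>)"
    unfolding frob_def by (rule sum_abs)
  also have "\<dots> \<le> (\<Sum>i\<in>UNIV. \<Sum>j\<in>UNIV. \<bar>A$i$j * X i j\<bar>)"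
    by (intro sum_mono sum_abs)
  also have "\<dots> \<le> (\<Sum>i\<in>UNIV. \<Sum>j\<in>UNIV. L * \<bar>X i j\<bar>)"
    by (intro sum_mono) (simp add: abs_mult mult_right_mono pucci_adm_entry_bound[OF adm lpos])
  finally show ?thesis by (simp add: sum_distrib_left)
qed

text \<open>The vectors \<open>m e\<^sub>k - u\<^sub>k u - v\<^sub>k v\<close> are \<open>m\<close> times the orthogonal projections of the
  standard basis onto the complement of \<open>span {u, v}\<close>.\<close>

lemma sum_qform_perp_axes:
  fixes A :: "real^'n^'n" and u v :: "real^('n::finite)"
  assumes sym: "transpose A = A" and uv: "u \<bullet> v = 0" and uu: "u \<bullet> u = m" and vv: "v \<bullet> v = m"
  defines "w \<equiv> \<lambda>k. m *\<^sub>R axis k 1 - u$k *\<^sub>R u - v$k *\<^sub>R v"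
  shows "(\<Sum>k\<in>UNIV. qform A (w k) (w k)) = m*m * trace A - m * (qform A u u + qform A v v)"
proof -
  have sy: "qform A a b = qform A b a" for a b using qform_sym[OF sym] by blast
  have "qform A (w k) (w k) = m*m * A$k$k - 2*m*u$k * (A *v u)$k - 2*m* v$k * (A *v v)$k
       + u$k*u$k * qform A u u + 2*u$k* v$k * qform A u v + v$k* v$k * qform A v v" for k
    unfolding w_def qform_diff_left qform_diff_right qform_scale_left qform_scale_right qform_axis
    unfolding qform_axis_left sy[of u "axis k 1"] sy[of v "axis k 1"] sy[of v u]
    by (simp add: algebra_simps)
  then have "(\<Sum>k\<in>UNIV. qform A (w k) (w k)) =
      m*m * (\<Sum>k\<in>UNIV. A$k$k) - 2*m * (u \<bullet> (A *v u)) - 2*m * (v \<bullet> (A *v v))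
      + (u \<bullet> u) * qform A u u + 2 * (u \<bullet> v) * qform A u v + (v \<bullet> v) * qform A v v"
    by (simp add: sum.distrib sum_subtractf sum_distrib_left sum_distrib_right inner_vec_def
        mult.assoc mult.left_commute)
  then show ?thesis using uv uu vv by (simp add: trace_def qform_def algebra_simps)
qed

lemma sum_norm_perp_axes:
  fixes u v :: "real^('n::finite)"
  assumes uv: "u \<bullet> v = 0" and uu: "u \<bullet> u = m" and vv: "v \<bullet> v = m"
  shows "(\<Sum>k\<in>UNIV. (norm (m *\<^sub>R axis k 1 - u$k *\<^sub>R u - v$k *\<^sub>R v))^2) = (real CARD('n) - 2) * (m*m)"
proof -
  have "(norm (m *\<^sub>R axis k 1 - u$k *\<^sub>R u - v$k *\<^sub>R v))^2 = m*m - m * (u$k*u$k) - m*(v$k* v$k)" for k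
    using uv uu vv
    by (simp add: power2_norm_eq_inner inner_diff_left inner_diff_right inner_axis inner_axis'
        inner_commute[of u v] algebra_simps)
  then have "(\<Sum>k\<in>UNIV. (norm (m *\<^sub>R axis k 1 - u$k *\<^sub>R u - v$k *\<^sub>R v))^2)
      = real CARD('n) * (m*m) - m * (u \<bullet> u) - m * (v \<bullet> v)"
    by (simp add: sum_subtractf sum_distrib_left inner_vec_def)
  then show ?thesis using uu vv by (simp add: algebra_simps)
qed

lemma trace_le_orthogonal_pair:
  fixes A :: "real^'n^'n" and u v :: "real^('n::finite)"
  assumes adm: "pucci_adm l L A" and uv: "u \<bullet> v = 0" and uu: "u \<bullet> u = m" and vv: "v \<bullet> v = m"
  shows "m * trace A \<le> (real CARD('n) - 2) * L * m + qform A u u + qform A v v"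
proof (cases "m = 0")
  case True
  then have "u = 0" "v = 0" using uu vv by auto
  then show ?thesis using True by (simp add: qform_def)
next
  case False
  then have mp: "m > 0" using uu by (metis inner_ge_zero order_le_less)
  define w where "w k = m *\<^sub>R axis k 1 - u$k *\<^sub>R u - v$k *\<^sub>R v" for k
  have "(\<Sum>k\<in>UNIV. qform A (w k) (w k)) \<le> (\<Sum>k\<in>UNIV. L * (norm (w k))^2)"
    by (rule sum_mono) (rule pucci_adm_upper[OF adm])
  then have "m*m * trace A - m * (qform A u u + qform A v v) \<le> L * ((real CARD('n) - 2) * (m*m))"
    using sum_qform_perp_axes[OF pucci_adm_symmetric[OF adm] uv uu vv] sum_norm_perp_axes[OF uv uu vv]
    unfolding w_def by (simp add: sum_distrib_left[symmetric])
  then have "m * (m * trace A) \<le> m * ((real CARD('n) - 2) * L * m + qform A u u + qform A v v)"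
    by (simp add: algebra_simps)
  then show ?thesis using mp by simp
qed

lemma sum_UNIV_Plus:
  "(\<Sum>i\<in>(UNIV::('a::finite + 'b::finite) set). f i) = (\<Sum>k\<in>UNIV. f (Inl k)) + (\<Sum>k\<in>UNIV. f (Inr k))"
  using sum.Plus[of "UNIV::'a set" "UNIV::'b set" f] by (simp add: o_def)

lemma CARD_Plus_self: "CARD('a::finite + 'a) = 2 * CARD('a)"
  using card_Plus[of "UNIV::'a set" "UNIV::'a set"] by simp

lemma jrot_nth: "jrot v $ Inl k = v $ Inr k" "jrot v $ Inr k = - v $ Inl k"
  by (simp_all add: jrot_def)

lemma jrot_0: "jrot 0 = 0"
  by (simp add: vec_eq_iff jrot_def split: sum.split)

lemma jrot_jrot: "jrot (jrot v) = - v"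
  by (simp add: vec_eq_iff jrot_def split: sum.splits)

lemma jrot_lincomb: "jrot (a *\<^sub>R v + b *\<^sub>R w) = a *\<^sub>R jrot v + b *\<^sub>R jrot w"
  by (simp add: vec_eq_iff jrot_def split: sum.splits)

lemma jrot_inner: "jrot v \<bullet> jrot w = v \<bullet> w"
  by (simp add: inner_vec_def sum_UNIV_Plus jrot_nth add.commute)

lemma inner_jrot_self: "v \<bullet> jrot v = 0"
  by (simp add: inner_vec_def sum_UNIV_Plus jrot_nth sum_negf mult.commute)

lemma jmat_antisym: "jmat j i = - jmat i j"
  by (cases i; cases j) (auto simp: jmat_def)

lemma frob_jmat:
  fixes A :: "real^('d::finite+'d)^('d+'d)"
  assumes "transpose A = A"
  shows "frob A jmat = 0"
proof -
  have "frob A jmat = (\<Sum>j\<in>UNIV. \<Sum>i\<in>UNIV. A$i$j * jmat i j)" unfolding frob_def by (rule sum.swap)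
  also have "\<dots> = (\<Sum>j\<in>UNIV. \<Sum>i\<in>UNIV. - (A$j$i * jmat j i))"
    by (intro sum.cong refl) (metis jmat_antisym symmetric_matrix_entry[OF assms] mult_minus_right)
  also have "\<dots> = - frob A jmat" by (simp add: frob_def sum_negf)
  finally show ?thesis by simp
qed

text \<open>For \<open>x = x\<^sub>H\<close> and \<open>t = x\<^sub>t\<close>, the left-hand side is \<open>P\<^sup>2 tr (A D\<^sup>2\<^sub>H log \<rho>)\<close>. The vectors
  \<open>\<eta>\<close> and \<open>J \<eta>\<close> are orthogonal of length \<open>\<surd>(m P)\<close> and split \<open>P (q(x) + q(J x))\<close>; trading
  \<open>-4 q(\<eta>)\<close> for \<open>-q(\<eta>) + 3 q(J \<eta>)\<close> leaves only the ellipticity bounds.\<close>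

lemma pucci_log_barrier_estimate:
  fixes x :: "('d::finite) hz" and t :: real
  assumes adm: "pucci_adm l L A"
  defines "m \<equiv> x \<bullet> x" and "jx \<equiv> jrot x"
  defines "\<eta> \<equiv> m *\<^sub>R x + t *\<^sub>R jx" and "P \<equiv> m^2 + t^2"
  shows "-4 * qform A \<eta> \<eta> + P * (2 * qform A x x + m * trace A + 2 * qform A jx jx)
         \<le> ((2 * real CARD('d) + 1) * L - l) * m * P"
proof -
  have sy: "qform A a b = qform A b a" for a b using qform_sym[OF pucci_adm_symmetric[OF adm]] by blast
  define J\<eta> where "J\<eta> = jrot \<eta>"
  have Je: "J\<eta> = m *\<^sub>R jx + (- t) *\<^sub>R x"
    unfolding J\<eta>_def \<eta>_def jx_def jrot_lincomb jrot_jrot by simp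
  have jj: "jx \<bullet> jx = m" unfolding jx_def m_def by (rule jrot_inner)
  have xj: "x \<bullet> jx = 0" unfolding jx_def by (rule inner_jrot_self)
  have split: "qform A \<eta> \<eta> + qform A J\<eta> J\<eta> = P * (qform A x x + qform A jx jx)"
    unfolding Je \<eta>_def P_def
    by (simp add: qform_add_left qform_add_right qform_diff_left qform_diff_right qform_scale_left
        qform_scale_right sy[of jx x]
        algebra_simps power2_eq_square)
  have n1: "\<eta> \<bullet> \<eta> = m * P"
    unfolding \<eta>_def P_def
    by (simp add: inner_add_left inner_add_right jj xj inner_commute[of jx x] m_def[symmetric]
        algebra_simps power2_eq_square)
  have n2: "J\<eta> \<bullet> J\<eta> = m * P"
    unfolding J\<eta>_def by (simp add: jrot_inner n1)
  have q1: "l * (m * P) \<le> qform A \<eta> \<eta>"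
    using pucci_adm_lower[OF adm, of \<eta>] n1 by (simp add: power2_norm_eq_inner)
  have q2: "qform A J\<eta> J\<eta> \<le> L * (m * P)"
    using pucci_adm_upper[OF adm, of J\<eta>] n2 by (simp add: power2_norm_eq_inner)
  have "m * trace A \<le> (real CARD('d + 'd) - 2) * L * m + qform A x x + qform A jx jx"
    using trace_le_orthogonal_pair[OF adm xj _ jj] unfolding m_def by simp
  then have "P * (m * trace A) \<le> P * ((2 * real CARD('d) - 2) * L * m + qform A x x + qform A jx jx)"
    unfolding CARD_Plus_self P_def by (intro mult_left_mono) auto
  then have "-4 * qform A \<eta> \<eta> + P * (2 * qform A x x + m * trace A + 2 * qform A jx jx)
     \<le> -4 * qform A \<eta> \<eta> + 3 * (P * (qform A x x + qform A jx jx)) + (2 * real CARD('d) - 2) * L * m * P"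
    by (simp add: algebra_simps)
  also have "\<dots> = - qform A \<eta> \<eta> + 3 * qform A J\<eta> J\<eta> + (2 * real CARD('d) - 2) * L * m * P"
    unfolding split[symmetric] by simp
  also have "\<dots> \<le> - (l * (m * P)) + 3 * (L * (m * P)) + (2 * real CARD('d) - 2) * L * m * P"
    using q1 q2 by linarith
  also have "\<dots> = ((2 * real CARD('d) + 1) * L - l) * m * P" by (simp add: algebra_simps)
  finally show ?thesis .
qed

lemma visc_sub_touching_bound:
  assumes sub: "visc_sub (\<lambda>x r p M. pucci_minus l L M + (INF \<alpha>. c \<alpha> x * r - b \<alpha> x \<bullet> p)) u"
    and C: "C2_with \<phi> g H" and e: "e > 0" and touch: "\<forall>y\<in>ball x0 e. u y - \<phi> y \<le> u x0 - \<phi> x0"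
    and lpos: "0 < l" and lL: "l \<le> L"
    and b1: "\<And>A. pucci_adm l L A \<Longrightarrow> \<beta>1 \<le> trace (- (A ** symm (hhess_of g H x0)))"
    and b2: "\<And>\<alpha>. \<beta>2 \<le> c \<alpha> x0 * u x0 - b \<alpha> x0 \<bullet> hgrad_of g x0"
  shows "\<beta>1 + \<beta>2 \<le> 0"
proof -
  have "pucci_minus l L (symm (hhess \<phi> x0)) + (INF \<alpha>. c \<alpha> x0 * u x0 - b \<alpha> x0 \<bullet> hgrad \<phi> x0) \<le> 0"
    using sub C2_with_imp_C2[OF C] e touch unfolding visc_sub_def by blast
  then have "pucci_minus l L (symm (hhess_of g H x0))
             + (INF \<alpha>. c \<alpha> x0 * u x0 - b \<alpha> x0 \<bullet> hgrad_of g x0) \<le> 0"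
    using hgrad_C2_with[OF C] hhess_C2_with[OF C] by simp
  moreover have "\<beta>1 \<le> pucci_minus l L (symm (hhess_of g H x0))"
    by (rule pucci_minus_greatest[OF lpos lL b1])
  moreover have "\<beta>2 \<le> (INF \<alpha>. c \<alpha> x0 * u x0 - b \<alpha> x0 \<bullet> hgrad_of g x0)"
    using b2 by (intro cINF_greatest) auto
  ultimately show ?thesis by linarith
qed

lemma SUP_eq_uminus_INF: "(SUP \<alpha>\<in>S. f \<alpha>) = - (INF \<alpha>\<in>S. - f \<alpha> :: real)"
  by (simp add: Inf_real_def image_image)

lemma matrix_mult_uminus_right: "A ** (- Y) = - (A ** Y :: real^'n::finite^'n)"
  by (simp add: vec_eq_iff matrix_matrix_mult_def sum_negf)

lemma pucci_plus_uminus: "pucci_plus l L (- Y) = - pucci_minus l L (Y :: real^'n::finite^'n)"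
  unfolding pucci_plus_def pucci_minus_def matrix_mult_uminus_right
  by (subst SUP_eq_uminus_INF) (simp add: trace_uminus)

lemma symm_uminus: "symm (- X) = - symm (X :: real^'n::finite^'n)"
proof -
  have t: "transpose (- X) = - transpose X" by (simp add: transpose_def vec_eq_iff)
  show ?thesis unfolding symm_def t by (simp add: algebra_simps)
qed

lemma matrix_vector_mult_uminus_left: "(- M) *v h = - (M *v (h :: real^'n::finite))"
  by (simp add: vec_eq_iff matrix_vector_mult_def sum_negf)

lemma hgrad_of_uminus: "hgrad_of (\<lambda>x. - g x) x = - hgrad_of g x"
  by (simp add: vec_eq_iff hgrad_of_nth)

lemma hhess_of_uminus: "hhess_of (\<lambda>x. - g x) (\<lambda>x. - H x) x = - hhess_of g H x"
  by (simp add: vec_eq_iff hhess_of_nth matrix_vector_mult_uminus_left)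

lemma visc_super_uminus_visc_sub:
  fixes b :: "'a \<Rightarrow> ('d::finite) pt \<Rightarrow> 'd hz" and c :: "'a \<Rightarrow> 'd pt \<Rightarrow> real" and v :: "'d pt \<Rightarrow> real"
  assumes sup: "visc_super (\<lambda>x r p M. pucci_plus l L M + (SUP \<alpha>. c \<alpha> x * r - b \<alpha> x \<bullet> p)) v"
  shows "visc_sub (\<lambda>x r p M. pucci_minus l L M + (INF \<alpha>. c \<alpha> x * r - b \<alpha> x \<bullet> p)) (\<lambda>x. - v x)"
  unfolding visc_sub_def
proof (intro conjI allI impI)
  have "lsc v" using sup unfolding visc_super_def by blast
  then show "usc (\<lambda>x. - v x)" unfolding usc_def lsc_def
  proof (intro allI)
    fix t assume "\<forall>t. open {x. t < v x}"
    then have "open {x. - t < v x}" by blast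
    moreover have "{x. - v x < t} = {x. - t < v x}" by auto
    ultimately show "open {x. - v x < t}" by simp
  qed
next
  fix \<phi> x0
  assume C: "C2 \<phi>" and lm: "\<exists>e>0. \<forall>y\<in>ball x0 e. - v y - \<phi> y \<le> - v x0 - \<phi> x0"
  obtain g H where CW: "C2_with \<phi> g H" using C2_imp_C2_with[OF C] by blast
  have CWn: "C2_with (\<lambda>x. - \<phi> x) (\<lambda>x. - g x) (\<lambda>x. - H x)" by (rule C2_with_uminus[OF CW])
  have lm2: "\<exists>e>0. \<forall>y\<in>ball x0 e. v y - (\<lambda>x. - \<phi> x) y \<ge> v x0 - (\<lambda>x. - \<phi> x) x0"
    using lm by (auto simp: algebra_simps)
  have "pucci_plus l L (symm (hhess (\<lambda>x. - \<phi> x) x0))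
        + (SUP \<alpha>. c \<alpha> x0 * v x0 - b \<alpha> x0 \<bullet> hgrad (\<lambda>x. - \<phi> x) x0) \<ge> 0"
    using sup C2_with_imp_C2[OF CWn] lm2 unfolding visc_super_def by blast
  moreover have "hgrad (\<lambda>x. - \<phi> x) x0 = - hgrad \<phi> x0"
    using hgrad_C2_with[OF CWn] hgrad_C2_with[OF CW] hgrad_of_uminus by simp
  moreover have "hhess (\<lambda>x. - \<phi> x) x0 = - hhess \<phi> x0"
    using hhess_C2_with[OF CWn] hhess_C2_with[OF CW] hhess_of_uminus by simp
  moreover have "(SUP \<alpha>. c \<alpha> x0 * v x0 - b \<alpha> x0 \<bullet> (- hgrad \<phi> x0))
                 = - (INF \<alpha>. c \<alpha> x0 * (- v x0) - b \<alpha> x0 \<bullet> hgrad \<phi> x0)"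
    by (subst SUP_eq_uminus_INF) (simp add: algebra_simps)
  ultimately show "pucci_minus l L (symm (hhess \<phi> x0))
                   + (INF \<alpha>. c \<alpha> x0 * (- v x0) - b \<alpha> x0 \<bullet> hgrad \<phi> x0) \<le> 0"
    by (simp add: symm_uminus pucci_plus_uminus)
qed

lemma usc_attains_max:
  fixes f :: "'a::topological_space \<Rightarrow> real"
  assumes u: "usc f" and K: "compact K" "K \<noteq> {}"
  shows "\<exists>z\<in>K. \<forall>x\<in>K. f x \<le> f z"
proof (rule ccontr)
  assume "\<not> ?thesis"
  then have h: "\<forall>z\<in>K. \<exists>x\<in>K. f z < f x" by (auto simp: not_le)
  have cov: "K \<subseteq> (\<Union>y\<in>K. {x. f x < f y})" using h by blast
  have op: "\<And>y. y \<in> K \<Longrightarrow> open {x. f x < f y}" using u unfolding usc_def by blast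
  obtain C' where C': "C' \<subseteq> K" "finite C'" "K \<subseteq> (\<Union>y\<in>C'. {x. f x < f y})"
    using compactE_image[OF K(1) op cov] by blast
  have ne: "C' \<noteq> {}" using C'(3) K(2) by blast
  have "Max (f ` C') \<in> f ` C'" using C'(2) ne by (intro Max_in) auto
  then obtain y where y: "y \<in> C'" "f y = Max (f ` C')" by auto
  have yK: "y \<in> K" using y C' by blast
  then obtain y' where y': "y' \<in> C'" "f y < f y'" using C'(3) by blast
  have "f y' \<le> Max (f ` C')" using C'(2) y' by (intro Max_ge) auto
  then show False using y y' by simp
qed

lemma usc_diff_continuous:
  assumes u: "usc u" and c: "continuous_on UNIV \<phi>"
  shows "usc (\<lambda>x. u x - \<phi> x)"
  unfolding usc_def
proof
  fix t
  have eq: "{x. u x - \<phi> x < t} = (\<Union>q. {x. u x < q} \<inter> {x. q - t < \<phi> x})"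
  proof (intro set_eqI iffI)
    fix x assume "x \<in> {x. u x - \<phi> x < t}"
    then have "u x < (u x + \<phi> x + t)/2" "(u x + \<phi> x + t)/2 - t < \<phi> x" by auto
    then show "x \<in> (\<Union>q. {x. u x < q} \<inter> {x. q - t < \<phi> x})" by blast
  qed auto
  have "open ({x. u x < q} \<inter> {x. q - t < \<phi> x})" for q
  proof (rule open_Int)
    show "open {x. u x < q}" using u unfolding usc_def by blast
    show "open {x. q - t < \<phi> x}" by (rule open_Collect_less[OF continuous_on_const c])
  qed
  then show "open {x. u x - \<phi> x < t}" unfolding eq by (intro open_UN) auto
qed

text \<open>Finiteness of \<open>H\<^sub>i(0, 0, \<plusminus>e\<^sub>i)\<close> bounds \<open>b\<^sup>\<alpha>(0)\<close> uniformly in \<open>\<alpha>\<close>; the uniform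
  Lipschitz bound does the rest.\<close>

lemma b_bounded:
  fixes b :: "'a \<Rightarrow> ('d::finite) pt \<Rightarrow> 'd hz"
  assumes Hi_fin: "\<forall>x r p. bdd_below (range (\<lambda>\<alpha>. c \<alpha> x * r - b \<alpha> x \<bullet> p))"
    and b_lip: "\<forall>R>0. \<exists>K. \<forall>\<alpha> x y. norm x \<le> R \<longrightarrow> norm y \<le> R \<longrightarrow>
                   norm (b \<alpha> x - b \<alpha> y) \<le> K * norm (x - y)"
  shows "\<exists>B. \<forall>\<alpha> x. norm x \<le> R \<longrightarrow> norm (b \<alpha> x) \<le> B"
proof -
  have "\<exists>C. \<forall>\<alpha>. \<bar>b \<alpha> 0 $ i\<bar> \<le> C" for i
  proof -
    from Hi_fin[rule_format, of 0 0 "axis i 1"]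
    obtain C1 where C1: "\<And>\<alpha>. C1 \<le> - (b \<alpha> 0 \<bullet> axis i 1)" by (auto simp: bdd_below_def)
    from Hi_fin[rule_format, of 0 0 "- axis i 1"]
    obtain C2 where C2: "\<And>\<alpha>. C2 \<le> b \<alpha> 0 \<bullet> axis i 1" by (auto simp: bdd_below_def)
    have "\<bar>b \<alpha> 0 $ i\<bar> \<le> max (- C1) (- C2)" for \<alpha>
      using C1[of \<alpha>] C2[of \<alpha>] by (simp add: inner_axis)
    then show ?thesis by blast
  qed
  then obtain C where C: "\<And>i \<alpha>. \<bar>b \<alpha> 0 $ i\<bar> \<le> C i" by metis
  have n0: "norm (b \<alpha> 0) \<le> (\<Sum>i\<in>UNIV. C i)" for \<alpha>
    using norm_le_l1_cart[of "b \<alpha> 0"] sum_mono[of UNIV "\<lambda>i. \<bar>b \<alpha> 0 $ i\<bar>" C] C by force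
  define R' where "R' = max R 1"
  have "R' > 0" unfolding R'_def by simp
  then obtain K where
    K: "\<And>\<alpha> x y. norm x \<le> R' \<Longrightarrow> norm y \<le> R' \<Longrightarrow> norm (b \<alpha> x - b \<alpha> y) \<le> K * norm (x - y)"
    using b_lip by blast
  have "norm (b \<alpha> x) \<le> (\<Sum>i\<in>UNIV. C i) + \<bar>K\<bar> * R'" if "norm x \<le> R" for \<alpha> x
  proof -
    have x: "norm x \<le> R'" using that unfolding R'_def by simp
    have "norm (b \<alpha> x - b \<alpha> 0) \<le> K * norm x" using K[OF x, of 0 \<alpha>] \<open>R' > 0\<close> by simp
    also have "\<dots> \<le> \<bar>K\<bar> * R'"
      using x by (meson abs_ge_self abs_ge_zero mult_mono norm_ge_zero order_trans)
    finally have "norm (b \<alpha> x - b \<alpha> 0) \<le> \<bar>K\<bar> * R'" .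
    then show ?thesis using n0[of \<alpha>] norm_triangle_sub[of "b \<alpha> x" "b \<alpha> 0"] by linarith
  qed
  then show ?thesis by blast
qed

section \<open>The logarithmic barrier\<close>

lemma DERIV_if_split:
  fixes f g :: "real \<Rightarrow> real"
  assumes f: "\<And>x. a \<le> x \<Longrightarrow> (f has_real_derivative f' x) (at x)"
    and g: "\<And>x. x \<le> a \<Longrightarrow> (g has_real_derivative g' x) (at x)"
    and c1: "f a = g a" and c2: "f' a = g' a"
  shows "((\<lambda>x. if a \<le> x then f x else g x) has_real_derivative (if a \<le> x then f' x else g' x))
           (at x)"
proof -
  have "((\<lambda>x. if x \<in> {a..} then f x else g x) has_vector_derivative
      (if x \<in> {a..} then f' x else g' x)) (at x within UNIV)"
  proof (rule has_vector_derivative_If_within_closures)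
    show "x \<in> {a..} \<union> {..<a}" by auto
    show "UNIV = {a..} \<union> {..<a}" by auto
    show "(f has_vector_derivative f' x) (at x within {a..} \<union> closure {a..} \<inter> closure {..<a})"
      if "x \<in> {a..} \<union> closure {a..} \<inter> closure {..<a}"
      using that f[of x]
      by (auto simp: has_real_derivative_iff_has_vector_derivative[symmetric] intro: has_field_derivative_at_within)
    show "(g has_vector_derivative g' x) (at x within {..<a} \<union> closure {a..} \<inter> closure {..<a})"
      if "x \<in> {..<a} \<union> closure {a..} \<inter> closure {..<a}"
      using that g[of x]
      by (auto simp: has_real_derivative_iff_has_vector_derivative[symmetric] intro: has_field_derivative_at_within)
    show "f x = g x" if "x \<in> closure {a..}" "x \<in> closure {..<a}" for x
      using that c1 by auto
    show "f' x = g' x" if "x \<in> closure {a..}" "x \<in> closure {..<a}" for x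
      using that c2 by auto
  qed
  then show ?thesis by (simp add: has_real_derivative_iff_has_vector_derivative)
qed

text \<open>\<open>ln_ext a\<close> is \<open>ln\<close> on \<open>[a, \<infinity>)\<close>, continued below \<open>a\<close> by its second-order Taylor polynomial,
  so that \<open>ln_ext a \<circ> rho4\<close> is a \<open>C\<^sup>2\<close> function on all of space.\<close>

definition ln_ext :: "real \<Rightarrow> real \<Rightarrow> real" where
  "ln_ext a s = (if a \<le> s then ln s else ln a + (s - a) / a - (s - a)^2 / (2 * a^2))"

definition ln_ext1 :: "real \<Rightarrow> real \<Rightarrow> real" where
  "ln_ext1 a s = (if a \<le> s then 1 / s else 1 / a - (s - a) / a^2)"

definition ln_ext2 :: "real \<Rightarrow> real \<Rightarrow> real" where
  "ln_ext2 a s = - 1 / (max a s)^2"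

lemma ln_ext_DERIV: assumes "a > 0" shows "(ln_ext a has_real_derivative ln_ext1 a s) (at s)"
proof -
  have "((\<lambda>x. if a \<le> x then ln x else ln a + (x - a) / a - (x - a)^2 / (2 * a^2)) has_real_derivative
       (if a \<le> s then 1 / s else 1 / a - (s - a) / a^2)) (at s)"
  proof (rule DERIV_if_split)
    show "(ln has_real_derivative 1 / x) (at x)" if "a \<le> x" for x
      using that assms by (auto intro!: derivative_eq_intros simp: field_simps)
    show "((\<lambda>x. ln a + (x - a) / a - (x - a)^2 / (2 * a^2)) has_real_derivative 1 / a - (x - a) / a^2)
            (at x)" for x
      using assms by (auto intro!: derivative_eq_intros simp: field_simps power2_eq_square)
  qed auto
  then show ?thesis unfolding ln_ext_def[abs_def] ln_ext1_def by simp
qed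

lemma ln_ext1_DERIV: assumes "a > 0" shows "(ln_ext1 a has_real_derivative ln_ext2 a s) (at s)"
proof -
  have "((\<lambda>x. if a \<le> x then 1 / x else 1 / a - (x - a) / a^2) has_real_derivative
       (if a \<le> s then - 1 / s^2 else - 1 / a^2)) (at s)"
  proof (rule DERIV_if_split)
    show "((\<lambda>x. 1 / x) has_real_derivative - 1 / x^2) (at x)" if "a \<le> x" for x
      using that assms by (auto intro!: derivative_eq_intros simp: field_simps power2_eq_square)
    show "((\<lambda>x. 1 / a - (x - a) / a^2) has_real_derivative - 1 / a^2) (at x)" for x
      using assms by (auto intro!: derivative_eq_intros simp: field_simps power2_eq_square)
  qed auto
  moreover have "(if a \<le> s then - 1 / s^2 else - 1 / a^2) = ln_ext2 a s"
    unfolding ln_ext2_def by (auto simp: max_def)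
  ultimately show ?thesis unfolding ln_ext1_def[abs_def] by simp
qed

lemma continuous_ln_ext2: assumes "a > 0" shows "continuous_on UNIV (ln_ext2 a)"
proof -
  have "max a s \<noteq> 0" for s using assms by (auto simp: max_def)
  then show ?thesis unfolding ln_ext2_def[abs_def] by (intro continuous_intros) auto
qed

lemma rho4_nonneg: "rho4 x \<ge> 0"
  by (simp add: rho4_def)

lemma hrho_rho4: "hrho x = rho4 x powr (1/4)"
  by (simp add: hrho_def rho4_eq)

lemma hrho_pow4: "hrho x ^ 4 = rho4 x"
proof (cases "rho4 x = 0")
  case True then show ?thesis by (simp add: hrho_rho4)
next
  case False
  then have "(rho4 x powr (1/4)) ^ 4 = rho4 x powr (real 4 * (1/4))" by (rule powr_power)
  then show ?thesis using rho4_nonneg[of x] by (simp add: hrho_rho4)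
qed

lemma ln_hrho: "rho4 x > 0 \<Longrightarrow> ln (hrho x) = ln (rho4 x) / 4"
  by (simp add: hrho_rho4 ln_powr)

lemma hnorm2_inner: "hnorm2 x = hproj x \<bullet> hproj x"
  by (simp add: hnorm2_eq power2_norm_eq_inner)

lemma heta_eq: "heta x = hnorm2 x *\<^sub>R hproj x + tcoord x *\<^sub>R jrot (hproj x)"
  by (simp add: vec_eq_iff heta_nth)

lemma rho4_hnorm2: "rho4 x = (hnorm2 x)^2 + (tcoord x)^2"
  by (simp add: rho4_def inner_taxis tcoord_def)

definition ln_rho4_grad :: "real \<Rightarrow> ('d::finite) pt \<Rightarrow> 'd pt" where
  "ln_rho4_grad a x = ln_ext1 a (rho4 x) *\<^sub>R rho4_grad x"

definition ln_rho4_hess :: "real \<Rightarrow> ('d::finite) pt \<Rightarrow> real^('d+'d+unit)^('d+'d+unit)" where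
  "ln_rho4_hess a x = ln_ext2 a (rho4 x) *\<^sub>R outer (rho4_grad x) (rho4_grad x) + ln_ext1 a (rho4 x) *\<^sub>R rho4_hess x"

lemma C2_with_ln_rho4: "a > 0 \<Longrightarrow> C2_with (\<lambda>x. ln_ext a (rho4 x)) (ln_rho4_grad a) (ln_rho4_hess a)"
  unfolding ln_rho4_grad_def[abs_def] ln_rho4_hess_def[abs_def]
  by (rule C2_with_compose[OF ln_ext_DERIV ln_ext1_DERIV continuous_ln_ext2 C2_with_rho4])

lemma hgrad_of_ln_rho4: "hgrad_of (ln_rho4_grad a) x $ i = ln_ext1 a (rho4 x) * (4 * heta x $ i)"
  unfolding ln_rho4_grad_def[abs_def] hgrad_of_compose hgrad_of_rho4 ..

lemma hhess_of_ln_rho4: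
  "hhess_of (ln_rho4_grad a) (ln_rho4_hess a) x $ i $ j
   = ln_ext2 a (rho4 x) * ((4 * heta x $ i) * (4 * heta x $ j))
     + ln_ext1 a (rho4 x) * hhess_of rho4_grad rho4_hess x $ i $ j"
  unfolding ln_rho4_grad_def[abs_def] ln_rho4_hess_def[abs_def]
  using hhess_of_compose[of "ln_ext1 a" rho4 rho4_grad "ln_ext2 a" rho4_hess x i j]
  by (simp add: hgrad_of_rho4)

lemma hgrad_of_exp_axis:
  "hgrad_of (\<lambda>x. (k * exp (k * (axis (hidx i0) 1 \<bullet> x))) *\<^sub>R axis (hidx i0) 1) x $ i
   = k * exp (k * (axis (hidx i0) 1 \<bullet> x)) * (if i = i0 then 1 else 0)"
  by (simp add: hgrad_of_nth axis_one_inner hfield_hidx)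

lemma hhess_of_exp_axis:
  "hhess_of (\<lambda>x. (k * exp (k * (axis (hidx i0) 1 \<bullet> x))) *\<^sub>R axis (hidx i0) 1)
      (\<lambda>x. (k * k * exp (k * (axis (hidx i0) 1 \<bullet> x))) *\<^sub>R outer (axis (hidx i0) 1) (axis (hidx i0) 1))
      x $ i $ j
   = k * k * exp (k * (axis (hidx i0) 1 \<bullet> x)) * ((if i = i0 then 1 else 0) * (if j = i0 then 1 else 0))"
  by (simp add: hhess_of_nth matrix_vector_mult_scaleR_left outer_mult_vector axis_one_inner hfield_hidx
      hfield_diff_hidx)

text \<open>The exponential term contributes
  \<open>\<delta> k\<^sup>2 exp (k x\<^sub>i)\<close> to the second-order part but only \<open>\<delta> k exp (k x\<^sub>i)\<close> to the first-order
  part, so for large \<open>k\<close> it absorbs the drift.\<close>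

definition log_barrier :: "real \<Rightarrow> real \<Rightarrow> real \<Rightarrow> real \<Rightarrow> 'd + 'd \<Rightarrow> ('d::finite) pt \<Rightarrow> real" where
  "log_barrier a \<epsilon> \<delta> k i x = (\<epsilon>/4) * ln_ext a (rho4 x) + (-\<delta>) * exp (k * (axis (hidx i) 1 \<bullet> x))"

definition log_barrier_grad :: "real \<Rightarrow> real \<Rightarrow> real \<Rightarrow> real \<Rightarrow> 'd + 'd \<Rightarrow> ('d::finite) pt \<Rightarrow> 'd pt" where
  "log_barrier_grad a \<epsilon> \<delta> k i x = (\<epsilon>/4) *\<^sub>R ln_rho4_grad a x
     + (-\<delta>) *\<^sub>R ((k * exp (k * (axis (hidx i) 1 \<bullet> x))) *\<^sub>R axis (hidx i) 1)"

definition log_barrier_hess ::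
  "real \<Rightarrow> real \<Rightarrow> real \<Rightarrow> real \<Rightarrow> 'd + 'd \<Rightarrow> ('d::finite) pt \<Rightarrow> real^('d+'d+unit)^('d+'d+unit)" where
  "log_barrier_hess a \<epsilon> \<delta> k i x = (\<epsilon>/4) *\<^sub>R ln_rho4_hess a x
     + (-\<delta>) *\<^sub>R ((k * k * exp (k * (axis (hidx i) 1 \<bullet> x))) *\<^sub>R outer (axis (hidx i) 1) (axis (hidx i) 1))"

lemma C2_with_log_barrier:
  assumes "a > 0"
  shows "C2_with (\<lambda>x. C0 + log_barrier a \<epsilon> \<delta> k i x) (log_barrier_grad a \<epsilon> \<delta> k i) (log_barrier_hess a \<epsilon> \<delta> k i)"
proof -
  have "C2_with (\<lambda>x. C0 + log_barrier a \<epsilon> \<delta> k i x) (\<lambda>x. 0 + log_barrier_grad a \<epsilon> \<delta> k i x)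
      (\<lambda>x. 0 + log_barrier_hess a \<epsilon> \<delta> k i x)"
    unfolding log_barrier_def log_barrier_grad_def log_barrier_hess_def
    by (rule C2_with_add[OF C2_with_const
          C2_with_add[OF C2_with_scale[OF C2_with_ln_rho4[OF assms]] C2_with_scale[OF C2_with_exp_inner]]])
  then show ?thesis by simp
qed

lemma log_barrier_eq:
  assumes "0 < a" "a \<le> rho4 x"
  shows "log_barrier a \<epsilon> \<delta> k i x = \<epsilon> * ln (hrho x) - \<delta> * exp (k * (axis (hidx i) 1 \<bullet> x))"
  using assms ln_hrho[of x] by (simp add: log_barrier_def ln_ext_def)

lemma hgrad_log_barrier:
  assumes "0 < a" "a \<le> rho4 x"
  shows "hgrad_of (log_barrier_grad a \<epsilon> \<delta> k i) x
         = (\<epsilon> / rho4 x) *\<^sub>R heta x - (\<delta> * k * exp (k * (axis (hidx i) 1 \<bullet> x))) *\<^sub>R axis i 1"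
proof -
  have "hgrad_of (log_barrier_grad a \<epsilon> \<delta> k i) x $ j = (\<epsilon>/4) * (ln_ext1 a (rho4 x) * (4 * heta x $ j))
      + (-\<delta>) * (k * exp (k * (axis (hidx i) 1 \<bullet> x)) * (if j = i then 1 else 0))" for j
    unfolding log_barrier_grad_def hgrad_of_add hgrad_of_scale hgrad_of_ln_rho4 hgrad_of_exp_axis ..
  then show ?thesis using assms by (simp add: vec_eq_iff ln_ext1_def axis_def)
qed

lemma frob_hhess_log_barrier:
  fixes A :: "real^('d::finite+'d)^('d+'d)"
  assumes sym: "transpose A = A" and a: "0 < a" "a \<le> rho4 x"
  defines "P \<equiv> rho4 x" and "m \<equiv> hnorm2 x" and "xh \<equiv> hproj x" and "\<eta> \<equiv> heta x"
  shows "frob A (\<lambda>i j. hhess_of (log_barrier_grad a \<epsilon> \<delta> k i0) (log_barrier_hess a \<epsilon> \<delta> k i0) x $ i $ j)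
         = (\<epsilon> / P^2) * (-4 * qform A \<eta> \<eta> + P * (2 * qform A xh xh + m * trace A + 2 * qform A (jrot xh) (jrot xh)))
           - \<delta> * (k * k * exp (k * (axis (hidx i0) 1 \<bullet> x)) * A$i0$i0)"
proof -
  define ex where "ex = exp (k * (axis (hidx i0) 1 \<bullet> x))"
  have "hhess_of (log_barrier_grad a \<epsilon> \<delta> k i0) (log_barrier_hess a \<epsilon> \<delta> k i0) x $ i $ j
      = (\<epsilon> / 4) * (ln_ext2 a P * ((4 * \<eta> $ i) * (4 * \<eta> $ j)) + ln_ext1 a P *
          (8 * (xh $ i * xh $ j) + 4 * m * (if i = j then 1 else 0) + 8 * (jrot xh $ i * jrot xh $ j)
           + 4 * tcoord x * jmat i j))
        + (-\<delta>) * (k * k * ex * ((if i = i0 then 1 else 0) * (if j = i0 then 1 else 0)))" for i j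
    unfolding log_barrier_grad_def log_barrier_hess_def hhess_of_add hhess_of_scale hhess_of_ln_rho4
      hhess_of_exp_axis hhess_of_rho4 P_def m_def xh_def \<eta>_def ex_def ..
  moreover have "frob A (\<lambda>i j. (4 * \<eta> $ i) * (4 * \<eta> $ j)) = 16 * qform A \<eta> \<eta>"
    using frob_scale[of A 16 "\<lambda>i j. \<eta> $ i * \<eta> $ j"] frob_outer[of A \<eta> \<eta>] by (simp add: mult_ac)
  ultimately have "frob A (\<lambda>i j. hhess_of (log_barrier_grad a \<epsilon> \<delta> k i0) (log_barrier_hess a \<epsilon> \<delta> k i0) x $ i $ j)
      = (\<epsilon> / 4) * (ln_ext2 a P * (16 * qform A \<eta> \<eta>) + ln_ext1 a P *
          (8 * qform A xh xh + 4 * m * trace A + 8 * qform A (jrot xh) (jrot xh) + 4 * tcoord x * 0))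
        + (-\<delta>) * (k * k * ex * A$i0$i0)"
    by (simp only: frob_add frob_scale frob_outer frob_delta frob_diag_entry frob_jmat[OF sym])
  also have "\<dots> = (\<epsilon> / P^2) * (-4 * qform A \<eta> \<eta> + P * (2 * qform A xh xh + m * trace A
                    + 2 * qform A (jrot xh) (jrot xh))) - \<delta> * (k * k * ex * A$i0$i0)"
    using a unfolding P_def ln_ext1_def ln_ext2_def by (simp add: field_simps power2_eq_square)
  finally show ?thesis unfolding ex_def .
qed

lemma trace_hhess_log_barrier_ge:
  fixes A :: "real^('d::finite+'d)^('d+'d)"
  assumes adm: "pucci_adm l L A" and a: "0 < a" "a \<le> rho4 x" and \<epsilon>: "\<epsilon> \<ge> 0" and \<delta>: "\<delta> \<ge> 0"
  defines "K \<equiv> (2 * real CARD('d) + 1) * L - l"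
  shows "- \<epsilon> * K * hnorm2 x / rho4 x + \<delta> * (k * k * exp (k * (axis (hidx i0) 1 \<bullet> x))) * l
         \<le> trace (- (A ** symm (hhess_of (log_barrier_grad a \<epsilon> \<delta> k i0) (log_barrier_hess a \<epsilon> \<delta> k i0) x)))"
proof -
  define P where "P = rho4 x"
  define m where "m = hnorm2 x"
  define xh where "xh = hproj x"
  define ex where "ex = exp (k * (axis (hidx i0) 1 \<bullet> x))"
  have Pp: "P > 0" using a unfolding P_def by simp
  have sym: "transpose A = A" by (rule pucci_adm_symmetric[OF adm])
  have "-4 * qform A (heta x) (heta x) + P * (2 * qform A xh xh + m * trace A + 2 * qform A (jrot xh) (jrot xh))
        \<le> K * m * P"
    using pucci_log_barrier_estimate[OF adm, of xh "tcoord x"]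
    unfolding K_def P_def m_def xh_def heta_eq rho4_hnorm2 hnorm2_inner by simp
  then have "(\<epsilon> / P^2) * (-4 * qform A (heta x) (heta x)
               + P * (2 * qform A xh xh + m * trace A + 2 * qform A (jrot xh) (jrot xh)))
             \<le> (\<epsilon> / P^2) * (K * m * P)"
    using \<epsilon> by (intro mult_left_mono) auto
  also have "\<dots> = \<epsilon> * K * m / P" using Pp by (simp add: field_simps power2_eq_square)
  finally have "(\<epsilon> / P^2) * (-4 * qform A (heta x) (heta x)
               + P * (2 * qform A xh xh + m * trace A + 2 * qform A (jrot xh) (jrot xh)))
             \<le> \<epsilon> * K * m / P" .
  moreover have "\<delta> * (k * k * ex) * l \<le> \<delta> * (k * k * ex * A$i0$i0)"
    using pucci_adm_diag_ge[OF adm, of i0] \<delta> unfolding ex_def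
    by (metis mult.assoc mult_left_mono exp_ge_zero zero_le_mult_iff zero_le_square)
  ultimately show ?thesis
    unfolding trace_uminus trace_mult_symm[OF sym] frob_hhess_log_barrier[OF sym a]
    unfolding P_def m_def xh_def ex_def by simp
qed

lemma log_barrier_first_order_ge:
  fixes bv :: "('d::finite) hz"
  assumes a: "0 < a" "a \<le> rho4 x" and \<epsilon>: "\<epsilon> > 0" and \<delta>: "\<delta> > 0" and k: "k > 0"
    and bv: "norm bv \<le> B" and cv: "cv \<ge> 0" and ln_rho: "ln (hrho x) \<ge> 0"
    and r: "cv * (\<epsilon> * ln (hrho x)) \<le> cv * r"
    and structural: "hproj x \<noteq> 0 \<Longrightarrow> bv \<bullet> heta x / (norm (hproj x))\<^sup>2
                        - cv * (hrho x ^ 4 / (norm (hproj x))\<^sup>2) * ln (hrho x)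
                      \<le> l - L * ((2 * real CARD('d) + 2) - 1)"
  defines "K \<equiv> (2 * real CARD('d) + 1) * L - l"
  shows "\<epsilon> * K * hnorm2 x / rho4 x - \<delta> * k * exp (k * (axis (hidx i0) 1 \<bullet> x)) * B
         \<le> cv * r - bv \<bullet> hgrad_of (log_barrier_grad a \<epsilon> \<delta> k i0) x"
proof -
  define P where "P = rho4 x"
  define m where "m = hnorm2 x"
  define ex where "ex = exp (k * (axis (hidx i0) 1 \<bullet> x))"
  have Pp: "P > 0" using a unfolding P_def by simp
  have drift: "\<epsilon> * K * m / P \<le> cv * (\<epsilon> * ln (hrho x)) - (\<epsilon> / P) * (bv \<bullet> heta x)"
  proof (cases "hproj x = 0")
    case True
    then show ?thesis using cv ln_rho \<epsilon> unfolding m_def hnorm2_eq by (simp add: heta_eq jrot_0)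
  next
    case False
    have mp: "m > 0" unfolding m_def hnorm2_eq using False by simp
    have "bv \<bullet> heta x / m - cv * (P / m) * ln (hrho x) \<le> - K"
      using structural[OF False] unfolding m_def hnorm2_eq P_def hrho_pow4[symmetric] K_def
      by (simp add: algebra_simps)
    then have "bv \<bullet> heta x - cv * P * ln (hrho x) \<le> - K * m"
      using mp by (simp add: field_simps)
    then have "(\<epsilon> / P) * (bv \<bullet> heta x - cv * P * ln (hrho x)) \<le> (\<epsilon> / P) * (- K * m)"
      using \<epsilon> Pp by (intro mult_left_mono) auto
    moreover have "(\<epsilon> / P) * (bv \<bullet> heta x - cv * P * ln (hrho x))
        = (\<epsilon> / P) * (bv \<bullet> heta x) - cv * (\<epsilon> * ln (hrho x))"
      using Pp by (simp add: field_simps)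
    ultimately show ?thesis by simp
  qed
  have "- B \<le> bv \<bullet> axis i0 1"
    using component_le_norm_cart[of bv i0] bv by (simp add: inner_axis)
  then have "- (\<delta> * k * ex * B) \<le> \<delta> * k * ex * (bv \<bullet> axis i0 1)"
    using \<delta> k unfolding ex_def
    by (metis mult_left_mono mult_minus_right mult_pos_pos exp_gt_zero order_less_imp_le)
  moreover have "bv \<bullet> hgrad_of (log_barrier_grad a \<epsilon> \<delta> k i0) x
                 = (\<epsilon> / P) * (bv \<bullet> heta x) - \<delta> * k * ex * (bv \<bullet> axis i0 1)"
    unfolding hgrad_log_barrier[OF a] P_def ex_def by (simp add: inner_diff_right)
  ultimately show ?thesis using drift r unfolding P_def m_def ex_def by linarith
qed

lemma log_barrier_touching_absurd:
  fixes b :: "'a \<Rightarrow> ('d::finite) pt \<Rightarrow> 'd hz" and c :: "'a \<Rightarrow> 'd pt \<Rightarrow> real"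
  assumes sub: "visc_sub (\<lambda>x r p M. pucci_minus l L M + (INF \<alpha>. c \<alpha> x * r - b \<alpha> x \<bullet> p)) u"
    and lpos: "0 < l" and lL: "l \<le> L"
    and c_nonneg: "\<forall>\<alpha> x. c \<alpha> x \<ge> 0"
    and structural: "hproj x0 \<noteq> 0 \<Longrightarrow> \<forall>\<alpha>. b \<alpha> x0 \<bullet> heta x0 / (norm (hproj x0))\<^sup>2
                     - c \<alpha> x0 * (hrho x0 ^ 4 / (norm (hproj x0))\<^sup>2) * ln (hrho x0)
                   \<le> l - L * ((2 * real CARD('d) + 2) - 1)"
    and a: "0 < a" "a \<le> rho4 x0" and ln_rho: "ln (hrho x0) \<ge> 0"
    and \<epsilon>: "\<epsilon> > 0" and \<delta>: "\<delta> > 0" and k: "B < k * l" "k > 0"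
    and bB: "\<And>\<alpha>. norm (b \<alpha> x0) \<le> B"
    and cu: "\<And>\<alpha>. c \<alpha> x0 * (\<epsilon> * ln (hrho x0)) \<le> c \<alpha> x0 * u x0"
    and e: "e > 0"
    and touch: "\<forall>y\<in>ball x0 e. u y - (C0 + log_barrier a \<epsilon> \<delta> k i0 y) \<le> u x0 - (C0 + log_barrier a \<epsilon> \<delta> k i0 x0)"
  shows False
proof -
  define K where "K = (2 * real CARD('d) + 1) * L - l"
  define ex where "ex = exp (k * (axis (hidx i0) 1 \<bullet> x0))"
  have "(- \<epsilon> * K * hnorm2 x0 / rho4 x0 + \<delta> * (k * k * ex) * l)
        + (\<epsilon> * K * hnorm2 x0 / rho4 x0 - \<delta> * k * ex * B) \<le> 0"
  proof (rule visc_sub_touching_bound[OF sub C2_with_log_barrier[OF a(1)] e touch lpos lL])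
    show "- \<epsilon> * K * hnorm2 x0 / rho4 x0 + \<delta> * (k * k * ex) * l
          \<le> trace (- (A ** symm (hhess_of (log_barrier_grad a \<epsilon> \<delta> k i0) (log_barrier_hess a \<epsilon> \<delta> k i0) x0)))"
      if "pucci_adm l L A" for A
      using trace_hhess_log_barrier_ge[OF that a] \<epsilon> \<delta> unfolding K_def ex_def by simp
    show "\<epsilon> * K * hnorm2 x0 / rho4 x0 - \<delta> * k * ex * B
          \<le> c \<alpha> x0 * u x0 - b \<alpha> x0 \<bullet> hgrad_of (log_barrier_grad a \<epsilon> \<delta> k i0) x0" for \<alpha>
      using log_barrier_first_order_ge[OF a \<epsilon> \<delta> k(2) bB, of "c \<alpha> x0"] c_nonneg ln_rho cu structural
      unfolding K_def ex_def by blast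
  qed
  moreover have "0 < \<delta> * k * ex * (k * l - B)" using \<delta> k unfolding ex_def by simp
  ultimately show False by (simp add: algebra_simps)
qed

section \<open>A subsolution with logarithmic growth attains its maximum\<close>

lemma norm_pow2_eq: "(norm (x :: ('d::finite) pt))^2 = hnorm2 x + (tcoord x)^2"
proof -
  have "(norm x)^2 = (\<Sum>i\<in>UNIV. x$i * x$i)" by (simp add: power2_norm_eq_inner inner_vec_def)
  also have "\<dots> = (\<Sum>k\<in>UNIV. x$Inl k * x$Inl k)
                    + ((\<Sum>k\<in>UNIV. x$Inr (Inl k) * x$Inr (Inl k)) + x$Inr (Inr ()) * x$Inr (Inr ()))"
    by (simp add: sum_UNIV_Plus UNIV_unit)
  also have "\<dots> = hnorm2 x + (tcoord x)^2"
    by (simp add: hnorm2_def axis_one_inner sum_UNIV_Plus hidx_def tcoord_def power2_eq_square)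
  finally show ?thesis .
qed

lemma hnorm2_nonneg: "hnorm2 x \<ge> 0" by (simp add: hnorm2_eq)

lemma norm_le_of_rho4_le:
  assumes "rho4 x \<le> R" "R \<ge> 1"
  shows "norm x \<le> 2 * R"
proof -
  have R: "R \<le> R^2" using assms(2) by (simp add: power2_eq_square)
  have sq: "(hnorm2 x)^2 \<le> R" "(tcoord x)^2 \<le> R"
    using assms(1) rho4_hnorm2[of x] zero_le_power2[of "hnorm2 x"] zero_le_power2[of "tcoord x"] by linarith+
  have "(hnorm2 x)^2 \<le> R^2" using sq(1) R by linarith
  then have "hnorm2 x \<le> R" by (rule power2_le_imp_le) (use assms(2) in simp)
  then have "(norm x)^2 \<le> 2 * R" using sq(2) norm_pow2_eq[of x] by linarith
  also have "\<dots> \<le> (2 * R)^2" using assms(2) by (simp add: power2_eq_square)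
  finally show ?thesis by (rule power2_le_imp_le) (use assms(2) in simp)
qed

lemma rho4_le_norm: "rho4 x \<le> (norm x)^4 + (norm x)^2"
proof -
  have "hnorm2 x \<le> (norm x)^2" "(tcoord x)^2 \<le> (norm x)^2"
    using norm_pow2_eq[of x] hnorm2_nonneg[of x] by auto
  then have "(hnorm2 x)^2 \<le> ((norm x)^2)^2" using hnorm2_nonneg[of x] by (intro power_mono) auto
  moreover have "((norm x)^2)^2 = (norm x)^4" by (simp flip: power_mult)
  ultimately show ?thesis using rho4_hnorm2[of x] \<open>(tcoord x)^2 \<le> (norm x)^2\<close> by linarith
qed

lemma continuous_rho4: "continuous_on UNIV rho4"
  by (rule C2_with_continuous[OF C2_with_rho4])

lemma hrho_nonneg: "hrho x \<ge> 0" by (simp add: hrho_rho4)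

lemma hrho_ge_of_rho4: assumes "r \<ge> 0" "rho4 x \<ge> r^4" shows "hrho x \<ge> r"
proof (rule ccontr)
  assume "\<not> hrho x \<ge> r"
  then have "hrho x ^ 4 < r ^ 4" using hrho_nonneg[of x] by (intro power_strict_mono) auto
  then show False using assms hrho_pow4[of x] by simp
qed

lemma hrho_le_norm: "hrho x \<le> norm x + 1"
proof -
  define s where "s = norm x"
  have s0: "s \<ge> 0" unfolding s_def by simp
  have a1: "(s + 1)^2 \<ge> s^2 + 1" using s0 by (simp add: power2_eq_square algebra_simps)
  have a2: "((s + 1)^2)^2 \<ge> (s^2 + 1)^2" using a1 by (intro power_mono) auto
  have a3: "(s^2 + 1)^2 = s^4 + 2 * s^2 + 1" by (simp add: power2_eq_square power4_eq_xxxx algebra_simps)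
  have a4: "((s + 1)^2)^2 = (s + 1)^4" by (simp flip: power_mult)
  have "hrho x ^ 4 \<le> s^4 + s^2" unfolding hrho_pow4 s_def by (rule rho4_le_norm)
  also have "\<dots> \<le> (s + 1)^4" using a2 a3 a4 zero_le_power2[of s] by linarith
  finally have "hrho x ^ Suc 3 \<le> (s + 1) ^ Suc 3" by simp
  then have "hrho x \<le> s + 1" by (rule power_le_imp_le_base) (use s0 in simp)
  then show ?thesis unfolding s_def .
qed

lemma compact_rho4_shell: "compact {x::('d::finite) pt. r1 \<le> rho4 x \<and> rho4 x \<le> R}"
proof -
  have cl: "closed {x::'d pt. r1 \<le> rho4 x \<and> rho4 x \<le> R}"
  proof -
    have "{x::'d pt. r1 \<le> rho4 x \<and> rho4 x \<le> R} = {x. r1 \<le> rho4 x} \<inter> {x. rho4 x \<le> R}" by auto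
    moreover have "closed {x::'d pt. r1 \<le> rho4 x}"
      by (rule closed_Collect_le[OF continuous_on_const continuous_rho4])
    moreover have "closed {x::'d pt. rho4 x \<le> R}"
      by (rule closed_Collect_le[OF continuous_rho4 continuous_on_const])
    ultimately show ?thesis by (simp add: closed_Int)
  qed
  have "bounded {x::'d pt. r1 \<le> rho4 x \<and> rho4 x \<le> R}"
    unfolding bounded_iff
  proof (intro exI ballI)
    fix x assume "x \<in> {x::'d pt. r1 \<le> rho4 x \<and> rho4 x \<le> R}"
    then have "rho4 x \<le> max R 1" by (simp add: le_max_iff_disj)
    then show "norm x \<le> 2 * max R 1" by (rule norm_le_of_rho4_le) simp
  qed
  then show ?thesis using cl by (simp add: compact_eq_bounded_closed)
qed

lemma rho4_0: "rho4 0 = 0"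
  by (simp add: rho4_def hnorm2_def)

lemma eventually_below_log:
  assumes ls: "Limsup at_infinity (\<lambda>x. ereal (u x / ln (hrho x))) \<le> 0" and \<epsilon>: "\<epsilon> > 0"
  shows "\<exists>R\<ge>2. \<forall>x. R \<le> hrho x \<longrightarrow> u x < \<epsilon> * ln (hrho x)"
proof -
  have "Limsup at_infinity (\<lambda>x. ereal (u x / ln (hrho x))) < ereal \<epsilon>"
    using ls \<epsilon> by (meson ereal_less(2) order.strict_trans1 zero_ereal_def)
  then have "eventually (\<lambda>x. ereal (u x / ln (hrho x)) < ereal \<epsilon>) at_infinity"
    by (rule Limsup_lessD)
  then obtain bnd where bnd: "\<And>x. bnd \<le> norm x \<Longrightarrow> u x / ln (hrho x) < \<epsilon>"
    unfolding eventually_at_infinity by auto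
  have "u x < \<epsilon> * ln (hrho x)" if "max 2 (\<bar>bnd\<bar> + 1) \<le> hrho x" for x
  proof -
    have "bnd \<le> norm x" using hrho_le_norm[of x] that by linarith
    moreover have "ln (hrho x) > 0" using that by simp
    ultimately show ?thesis using bnd[of x] by (simp add: divide_less_eq mult.commute)
  qed
  then show ?thesis by (metis max.cobounded1)
qed

lemma log_barrier_annulus_max_absurd:
  fixes b :: "'a \<Rightarrow> ('d::finite) pt \<Rightarrow> 'd hz" and c :: "'a \<Rightarrow> 'd pt \<Rightarrow> real" and u :: "'d pt \<Rightarrow> real"
    and a \<epsilon> \<delta> k C0 :: real and i0 :: "'d + 'd"
  defines "\<phi> \<equiv> \<lambda>x. C0 + log_barrier a \<epsilon> \<delta> k i0 x"
  assumes sub: "visc_sub (\<lambda>x r p M. pucci_minus l L M + (INF \<alpha>. c \<alpha> x * r - b \<alpha> x \<bullet> p)) u"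
    and lpos: "0 < l" and lL: "l \<le> L"
    and c_nonneg: "\<forall>\<alpha> x. c \<alpha> x \<ge> 0"
    and structural: "\<forall>x. hrho x \<ge> r \<longrightarrow> hproj x \<noteq> 0 \<longrightarrow>
               (\<forall>\<alpha>. b \<alpha> x \<bullet> heta x / (norm (hproj x))\<^sup>2
                     - c \<alpha> x * (hrho x ^ 4 / (norm (hproj x))\<^sup>2) * ln (hrho x)
                   \<le> l - L * ((2 * real CARD('d) + 2) - 1))"
    and r: "r \<ge> 2" and \<epsilon>: "\<epsilon> > 0"
    and inner: "\<And>x. rho4 x \<le> r^4 \<Longrightarrow> u x \<le> M"
    and outer: "\<And>x. R \<le> hrho x \<Longrightarrow> u x \<le> M + \<epsilon> * ln (hrho x)"
    and cM: "(\<forall>\<alpha> x. c \<alpha> x = 0) \<or> M \<ge> 0"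
    and a: "0 < a" "a \<le> r^4" and \<delta>: "\<delta> > 0" and k: "B < k * l" "k > 0"
    and bB: "\<And>\<alpha> x. r^4 \<le> rho4 x \<Longrightarrow> rho4 x \<le> R^4 \<Longrightarrow> norm (b \<alpha> x) \<le> B"
    and \<phi>_ge: "\<And>x. r^4 \<le> rho4 x \<Longrightarrow> rho4 x \<le> R^4 \<Longrightarrow> M + \<epsilon> * ln (hrho x) \<le> \<phi> x"
    and x0: "r^4 \<le> rho4 x0" "rho4 x0 \<le> R^4"
    and x0_max: "\<And>x. r^4 \<le> rho4 x \<Longrightarrow> rho4 x \<le> R^4 \<Longrightarrow> u x - \<phi> x \<le> u x0 - \<phi> x0"
    and pos: "u x0 - \<phi> x0 > 0"
  shows False
proof -
  have rho0: "hrho x0 \<ge> r" using hrho_ge_of_rho4[of r x0] x0 r by simp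
  then have ln0: "ln (hrho x0) > 0" using r by simp
  have lo: "r^4 < rho4 x0"
  proof (rule ccontr)
    assume "\<not> r^4 < rho4 x0"
    then show False using inner[of x0] \<phi>_ge[OF x0] pos mult_pos_pos[OF \<epsilon> ln0] by simp
  qed
  have hi: "rho4 x0 < R^4"
  proof (rule ccontr)
    assume "\<not> rho4 x0 < R^4"
    then have "R \<le> hrho x0" using hrho_ge_of_rho4[of R x0] hrho_nonneg[of x0] by (cases "0 \<le> R") auto
    then show False using outer[of x0] \<phi>_ge[OF x0] pos by simp
  qed
  obtain e where e: "e > 0" "ball x0 e \<subseteq> {x. r^4 < rho4 x} \<inter> {x. rho4 x < R^4}"
    using lo hi open_contains_ball
      open_Int[OF open_Collect_less[OF continuous_on_const continuous_rho4]
                  open_Collect_less[OF continuous_rho4 continuous_on_const]]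
    by (metis IntI mem_Collect_eq)
  have touch: "\<forall>y\<in>ball x0 e. u y - \<phi> y \<le> u x0 - \<phi> x0"
    using e(2) x0_max by fastforce
  have cu: "c \<alpha> x0 * (\<epsilon> * ln (hrho x0)) \<le> c \<alpha> x0 * u x0" for \<alpha>
  proof (cases "\<forall>\<alpha> x. c \<alpha> x = 0")
    case False
    then have "\<epsilon> * ln (hrho x0) \<le> u x0" using cM \<phi>_ge[OF x0] pos by auto
    then show ?thesis using c_nonneg by (simp add: mult_left_mono)
  qed simp
  have "hproj x0 \<noteq> 0 \<Longrightarrow> \<forall>\<alpha>. b \<alpha> x0 \<bullet> heta x0 / (norm (hproj x0))\<^sup>2
        - c \<alpha> x0 * (hrho x0 ^ 4 / (norm (hproj x0))\<^sup>2) * ln (hrho x0) \<le> l - L * ((2 * real CARD('d) + 2) - 1)"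
    using structural rho0 by blast
  moreover have "a \<le> rho4 x0" using lo a(2) by simp
  ultimately show False
    using log_barrier_touching_absurd[OF sub lpos lL c_nonneg _ a(1) _ less_imp_le[OF ln0] \<epsilon> \<delta> k
        bB[OF x0] cu e(1) touch[unfolded \<phi>_def]]
    by blast
qed

lemma subsolution_le_log_barrier:
  fixes b :: "'a \<Rightarrow> ('d::finite) pt \<Rightarrow> 'd hz" and c :: "'a \<Rightarrow> 'd pt \<Rightarrow> real" and u :: "'d pt \<Rightarrow> real"
  assumes sub: "visc_sub (\<lambda>x r p M. pucci_minus l L M + (INF \<alpha>. c \<alpha> x * r - b \<alpha> x \<bullet> p)) u"
    and lpos: "0 < l" and lL: "l \<le> L"
    and Hi_fin: "\<forall>x r p. bdd_below (range (\<lambda>\<alpha>. c \<alpha> x * r - b \<alpha> x \<bullet> p))"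
    and b_lip: "\<forall>R>0. \<exists>K. \<forall>\<alpha> x y. norm x \<le> R \<longrightarrow> norm y \<le> R \<longrightarrow>
                   norm (b \<alpha> x - b \<alpha> y) \<le> K * norm (x - y)"
    and c_nonneg: "\<forall>\<alpha> x. c \<alpha> x \<ge> 0"
    and structural: "\<forall>x. hrho x \<ge> r \<longrightarrow> hproj x \<noteq> 0 \<longrightarrow>
               (\<forall>\<alpha>. b \<alpha> x \<bullet> heta x / (norm (hproj x))\<^sup>2
                     - c \<alpha> x * (hrho x ^ 4 / (norm (hproj x))\<^sup>2) * ln (hrho x)
                   \<le> l - L * ((2 * real CARD('d) + 2) - 1))"
    and r: "r \<ge> 2" and \<epsilon>: "\<epsilon> > 0"
    and inner: "\<And>x. rho4 x \<le> r^4 \<Longrightarrow> u x \<le> M"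
    and outer: "\<And>x. R \<le> hrho x \<Longrightarrow> u x \<le> M + \<epsilon> * ln (hrho x)"
    and cM: "(\<forall>\<alpha> x. c \<alpha> x = 0) \<or> M \<ge> 0"
    and y: "r^4 \<le> rho4 y" "rho4 y \<le> R^4"
  shows "u y \<le> M + \<epsilon> * ln (hrho y)"
proof (rule ccontr)
  assume "\<not> ?thesis"
  then obtain \<theta> where \<theta>: "\<theta> > 0" "u y = M + \<epsilon> * ln (hrho y) + \<theta>"
    by (metis add.commute diff_add_cancel diff_gt_0_iff_gt not_le)
  have usc: "usc u" using sub unfolding visc_sub_def by blast
  define Ann where "Ann = {x::'d pt. r^4 \<le> rho4 x \<and> rho4 x \<le> R^4}"
  define Rb where "Rb = 2 * max (R^4) 1"
  have Rb: "norm x \<le> Rb" if "rho4 x \<le> R^4" for x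
    using that norm_le_of_rho4_le[of x "max (R^4) 1"] unfolding Rb_def by (simp add: le_max_iff_disj)
  obtain B where B: "\<And>\<alpha> x. norm x \<le> Rb \<Longrightarrow> norm (b \<alpha> x) \<le> B"
    using b_bounded[OF Hi_fin b_lip, of Rb] by blast
  define k where "k = (\<bar>B\<bar> + 1) / l"
  have k: "B < k * l" "k > 0" unfolding k_def using lpos by simp_all
  define E where "E = exp (k * Rb)"
  define \<delta> where "\<delta> = \<theta> / (2 * E)"
  have \<delta>: "\<delta> > 0" "\<delta> * E = \<theta> / 2" unfolding \<delta>_def E_def using \<theta> by simp_all
  define a where "a = r^4 / 2"
  have a: "0 < a" "a \<le> r^4" unfolding a_def using r by simp_all
  obtain i0 :: "'d + 'd" where True by simp
  define \<phi> where "\<phi> = (\<lambda>x. (M + \<delta> * E) + log_barrier a \<epsilon> \<delta> k i0 x)"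
  have \<phi>: "\<phi> x = M + \<epsilon> * ln (hrho x) + \<delta> * E - \<delta> * exp (k * (axis (hidx i0) 1 \<bullet> x))"
    if "r^4 \<le> rho4 x" for x
    using log_barrier_eq[of a x] a that unfolding \<phi>_def by (simp add: algebra_simps)
  have \<phi>_ge: "M + \<epsilon> * ln (hrho x) \<le> \<phi> x" if "r^4 \<le> rho4 x" "rho4 x \<le> R^4" for x
  proof -
    have "axis (hidx i0) 1 \<bullet> x \<le> Rb"
      using component_le_norm_cart[of x "hidx i0"] Rb[OF that(2)] by (simp add: axis_one_inner)
    then have "\<delta> * exp (k * (axis (hidx i0) 1 \<bullet> x)) \<le> \<delta> * E" unfolding E_def using k \<delta> by simp
    then show ?thesis using \<phi>[OF that(1)] by simp
  qed
  obtain x0 where x0: "x0 \<in> Ann" "\<And>x. x \<in> Ann \<Longrightarrow> u x - \<phi> x \<le> u x0 - \<phi> x0"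
    using usc_attains_max[OF usc_diff_continuous[OF usc C2_with_continuous[OF C2_with_log_barrier[OF a(1)]]],
        of Ann "M + \<delta> * E"] compact_rho4_shell y
    unfolding Ann_def \<phi>_def by blast
  have "0 \<le> \<delta> * exp (k * (axis (hidx i0) 1 \<bullet> y))" using \<delta> by simp
  then have "u y - \<phi> y \<ge> \<theta> / 2" using \<phi>[OF y(1)] \<theta>(2) \<delta>(2) by linarith
  then have "u x0 - \<phi> x0 > 0" using x0(2)[of y] y \<theta> unfolding Ann_def by force
  then show False
    using log_barrier_annulus_max_absurd[OF sub lpos lL c_nonneg structural r \<epsilon> inner outer cM a \<delta>(1) k
        _ \<phi>_ge[unfolded \<phi>_def]] B Rb x0 unfolding Ann_def \<phi>_def by blast
qed

lemma subsolution_attains_max: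
  fixes b :: "'a \<Rightarrow> ('d::finite) pt \<Rightarrow> 'd hz" and c :: "'a \<Rightarrow> 'd pt \<Rightarrow> real" and u :: "'d pt \<Rightarrow> real"
  assumes sub: "visc_sub (\<lambda>x r p M. pucci_minus l L M + (INF \<alpha>. c \<alpha> x * r - b \<alpha> x \<bullet> p)) u"
    and lpos: "0 < l" and lL: "l \<le> L"
    and Hi_fin: "\<forall>x r p. bdd_below (range (\<lambda>\<alpha>. c \<alpha> x * r - b \<alpha> x \<bullet> p))"
    and b_lip: "\<forall>R>0. \<exists>K. \<forall>\<alpha> x y. norm x \<le> R \<longrightarrow> norm y \<le> R \<longrightarrow>
                   norm (b \<alpha> x - b \<alpha> y) \<le> K * norm (x - y)"
    and c_nonneg: "\<forall>\<alpha> x. c \<alpha> x \<ge> 0"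
    and structural: "\<forall>x. hrho x \<ge> R0 \<longrightarrow> hproj x \<noteq> 0 \<longrightarrow>
               (\<forall>\<alpha>. b \<alpha> x \<bullet> heta x / (norm (hproj x))\<^sup>2
                     - c \<alpha> x * (hrho x ^ 4 / (norm (hproj x))\<^sup>2) * ln (hrho x)
                   \<le> l - L * ((2 * real CARD('d) + 2) - 1))"
    and ls: "Limsup at_infinity (\<lambda>x. ereal (u x / ln (hrho x))) \<le> 0"
    and cu: "(\<forall>\<alpha> x. c \<alpha> x = 0) \<or> (\<forall>x. u x \<ge> 0)"
  shows "\<exists>z. \<forall>x. u x \<le> u z"
proof -
  have usc: "usc u" using sub unfolding visc_sub_def by blast
  define r where "r = max R0 2"
  have r: "r \<ge> 2" "r \<ge> R0" unfolding r_def by simp_all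
  have "0 \<in> {x::'d pt. 0 \<le> rho4 x \<and> rho4 x \<le> r^4}" using r by (simp add: rho4_0)
  then obtain z where "\<forall>x\<in>{x. 0 \<le> rho4 x \<and> rho4 x \<le> r^4}. u x \<le> u z"
    using usc_attains_max[OF usc compact_rho4_shell] by blast
  then have z: "\<And>x. rho4 x \<le> r^4 \<Longrightarrow> u x \<le> u z" using rho4_nonneg by blast
  have "u y \<le> u z" for y
  proof (rule ccontr)
    assume uy: "\<not> u y \<le> u z"
    then have y: "r^4 \<le> rho4 y" using z[of y] by linarith
    have "hrho y \<ge> r" using hrho_ge_of_rho4[OF _ y] r by simp
    then have ln_y: "ln (hrho y) > 0" using r by simp
    define \<epsilon> where "\<epsilon> = (u y - u z) / (2 * ln (hrho y))"
    have \<epsilon>: "\<epsilon> > 0" "\<epsilon> * ln (hrho y) = (u y - u z) / 2" unfolding \<epsilon>_def using uy ln_y by simp_all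
    obtain R where R: "R \<ge> 2" "\<And>x. R \<le> hrho x \<Longrightarrow> u x < (\<epsilon>/2) * ln (hrho x)"
      using eventually_below_log[OF ls, of "\<epsilon>/2"] \<epsilon> by auto
    define R' where "R' = max (max R (hrho y)) (exp (2 * \<bar>u z\<bar> / \<epsilon>))"
    have outer: "u x \<le> u z + \<epsilon> * ln (hrho x)" if "R' \<le> hrho x" for x
    proof -
      have "exp (2 * \<bar>u z\<bar> / \<epsilon>) \<le> hrho x" "R \<le> hrho x" using that unfolding R'_def by simp_all
      then have "2 * \<bar>u z\<bar> / \<epsilon> \<le> ln (hrho x)" using R(1) by (simp add: ln_ge_iff)
      then have "\<bar>u z\<bar> \<le> (\<epsilon>/2) * ln (hrho x)" using \<epsilon>(1) by (simp add: field_simps)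
      then show ?thesis using R(2)[OF \<open>R \<le> hrho x\<close>] by linarith
    qed
    have "rho4 y \<le> R'^4"
      using power_mono[of "hrho y" R' 4] hrho_nonneg[of y] unfolding R'_def hrho_pow4 by simp
    moreover have "(\<forall>\<alpha> x. c \<alpha> x = 0) \<or> u z \<ge> 0" using cu by blast
    moreover have "\<forall>x. hrho x \<ge> r \<longrightarrow> hproj x \<noteq> 0 \<longrightarrow>
               (\<forall>\<alpha>. b \<alpha> x \<bullet> heta x / (norm (hproj x))\<^sup>2
                     - c \<alpha> x * (hrho x ^ 4 / (norm (hproj x))\<^sup>2) * ln (hrho x)
                   \<le> l - L * ((2 * real CARD('d) + 2) - 1))"
      using structural r(2) by auto
    ultimately have "u y \<le> u z + \<epsilon> * ln (hrho y)"
      by (intro subsolution_le_log_barrier[OF sub lpos lL Hi_fin b_lip c_nonneg _ r(1) \<epsilon>(1) z outer _ y])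
    then show False using \<epsilon>(2) uy by (simp add: field_simps)
  qed
  then show ?thesis by blast
qed

section \<open>A Hopf lemma at the maximum set\<close>

definition hradial :: "('d::finite) pt \<Rightarrow> 'd pt \<Rightarrow> 'd hz" where
  "hradial q x = (\<chi> i. (x - q) \<bullet> hfield i x)"

definition dist2_hhess :: "('d::finite) pt \<Rightarrow> 'd pt \<Rightarrow> ('d + 'd) \<Rightarrow> ('d + 'd) \<Rightarrow> real" where
  "dist2_hhess q x i j = 2 * (hfield i x \<bullet> hfield j x) + 2 * ((x - q) \<bullet> hfield_diff j (hfield i x))"

lemma continuous_hradial: "continuous_on UNIV (hradial q)"
  unfolding hradial_def by (intro continuous_intros continuous_hfield)

lemma continuous_dist2_hhess: "continuous_on UNIV (\<lambda>x. dist2_hhess q x i j)"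
  unfolding dist2_hhess_def by (intro continuous_intros continuous_hfield continuous_hfield_diff_hfield)

definition hopf_barrier_grad :: "('d::finite) pt \<Rightarrow> real \<Rightarrow> real \<Rightarrow> 'd pt \<Rightarrow> 'd pt" where
  "hopf_barrier_grad q \<delta> k x = (-\<delta>) *\<^sub>R ((- k * exp (- k * ((x - q) \<bullet> (x - q)))) *\<^sub>R (2 *\<^sub>R (x - q)))"

definition hopf_barrier_hess ::
  "('d::finite) pt \<Rightarrow> real \<Rightarrow> real \<Rightarrow> 'd pt \<Rightarrow> real^('d+'d+unit)^('d+'d+unit)" where
  "hopf_barrier_hess q \<delta> k x =
     (-\<delta>) *\<^sub>R ((k * k * exp (- k * ((x - q) \<bullet> (x - q)))) *\<^sub>R outer (2 *\<^sub>R (x - q)) (2 *\<^sub>R (x - q))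
             + (- k * exp (- k * ((x - q) \<bullet> (x - q)))) *\<^sub>R (2 *\<^sub>R mat 1))"

lemma C2_with_hopf_barrier:
  "C2_with (\<lambda>x. C0 + (-\<delta>) * exp (- k * ((x - q) \<bullet> (x - q)))) (hopf_barrier_grad q \<delta> k) (hopf_barrier_hess q \<delta> k)"
proof -
  have d1: "((\<lambda>s. exp (- k * s)) has_real_derivative - k * exp (- k * s)) (at s)" for s
    by (auto intro!: derivative_eq_intros)
  have d2: "((\<lambda>s. - k * exp (- k * s)) has_real_derivative k * k * exp (- k * s)) (at s)" for s
    by (auto intro!: derivative_eq_intros)
  have "C2_with (\<lambda>x. C0 + (-\<delta>) * exp (- k * ((x - q) \<bullet> (x - q))))
      (\<lambda>x. 0 + hopf_barrier_grad q \<delta> k x) (\<lambda>x. 0 + hopf_barrier_hess q \<delta> k x)"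
    unfolding hopf_barrier_grad_def hopf_barrier_hess_def
    by (rule C2_with_add[OF C2_with_const C2_with_scale[OF C2_with_compose[OF d1 d2 _ C2_with_dist2]]])
      (intro continuous_intros)
  then show ?thesis by simp
qed

lemma hgrad_hopf_barrier:
  "hgrad_of (hopf_barrier_grad q \<delta> k) x = (2 * \<delta> * k * exp (- k * ((x - q) \<bullet> (x - q)))) *\<^sub>R hradial q x"
  unfolding vec_eq_iff hgrad_of_nth hopf_barrier_grad_def hradial_def by simp

lemma hhess_hopf_barrier:
  "hhess_of (hopf_barrier_grad q \<delta> k) (hopf_barrier_hess q \<delta> k) x $ i $ j
   = (- \<delta> * exp (- k * ((x - q) \<bullet> (x - q))))
     * ((4 * k * k) * (hradial q x $ i * hradial q x $ j) + (- k) * dist2_hhess q x i j)"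
  unfolding hhess_of_nth hopf_barrier_grad_def hopf_barrier_hess_def hradial_def dist2_hhess_def
  by (simp add: matrix_vector_mult_add_rdistrib matrix_vector_mult_scaleR_left outer_mult_vector algebra_simps)

lemma trace_hhess_hopf_barrier_ge:
  fixes A :: "real^('d::finite+'d)^('d+'d)"
  assumes adm: "pucci_adm l L A" and lpos: "0 < l" and lL: "l \<le> L" and \<delta>: "\<delta> \<ge> 0" and k: "k \<ge> 0"
    and g0: "0 \<le> g0" "g0 \<le> norm (hradial q x)"
    and Sb: "\<bar>\<Sum>i\<in>UNIV. \<Sum>j\<in>UNIV. \<bar>dist2_hhess q x i j\<bar>\<bar> \<le> Sb"
  shows "\<delta> * exp (- k * ((x - q) \<bullet> (x - q))) * (4 * k * k * l * g0^2 - k * L * Sb)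
         \<le> trace (- (A ** symm (hhess_of (hopf_barrier_grad q \<delta> k) (hopf_barrier_hess q \<delta> k) x)))"
proof -
  define ex where "ex = exp (- k * ((x - q) \<bullet> (x - q)))"
  define v where "v = hradial q x"
  have sym: "transpose A = A" by (rule pucci_adm_symmetric[OF adm])
  have "l * g0^2 \<le> l * (norm v)^2" using g0 lpos unfolding v_def by (intro mult_left_mono power_mono) auto
  then have q1: "l * g0^2 \<le> qform A v v" using pucci_adm_lower[OF adm, of v] by linarith
  have "\<bar>frob A (dist2_hhess q x)\<bar> \<le> L * (\<Sum>i\<in>UNIV. \<Sum>j\<in>UNIV. \<bar>dist2_hhess q x i j\<bar>)"
    by (rule frob_bound[OF adm lpos])
  also have "\<dots> \<le> L * Sb" using Sb lpos lL by (intro mult_left_mono) auto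
  finally have q2: "frob A (dist2_hhess q x) \<le> L * Sb" by simp
  have "frob A (\<lambda>i j. hhess_of (hopf_barrier_grad q \<delta> k) (hopf_barrier_hess q \<delta> k) x $ i $ j)
      = (- \<delta> * ex) * ((4 * k * k) * qform A v v + (- k) * frob A (dist2_hhess q x))"
    unfolding hhess_hopf_barrier ex_def v_def by (simp only: frob_scale frob_add frob_outer)
  then have "trace (- (A ** symm (hhess_of (hopf_barrier_grad q \<delta> k) (hopf_barrier_hess q \<delta> k) x)))
      = \<delta> * ex * (4 * k * k * qform A v v - k * frob A (dist2_hhess q x))"
    unfolding trace_uminus trace_mult_symm[OF sym] by (simp add: algebra_simps)
  moreover have "4 * k * k * l * g0^2 - k * L * Sb \<le> 4 * k * k * qform A v v - k * frob A (dist2_hhess q x)"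
    using mult_left_mono[OF q1, of "4 * k * k"] mult_left_mono[OF q2 k] k by (simp add: mult.assoc)
  then have "\<delta> * ex * (4 * k * k * l * g0^2 - k * L * Sb)
      \<le> \<delta> * ex * (4 * k * k * qform A v v - k * frob A (dist2_hhess q x))"
    using \<delta> unfolding ex_def by (intro mult_left_mono) auto
  ultimately show ?thesis unfolding ex_def by simp
qed

lemma hopf_barrier_touching_absurd:
  fixes b :: "'a \<Rightarrow> ('d::finite) pt \<Rightarrow> 'd hz" and c :: "'a \<Rightarrow> 'd pt \<Rightarrow> real"
  assumes sub: "visc_sub (\<lambda>x r p M. pucci_minus l L M + (INF \<alpha>. c \<alpha> x * r - b \<alpha> x \<bullet> p)) u"
    and lpos: "0 < l" and lL: "l \<le> L"
    and cu: "\<And>\<alpha>. c \<alpha> x0 * u x0 \<ge> 0"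
    and g0: "0 < g0" "g0 \<le> norm (hradial q x0)" and Gb: "norm (hradial q x0) \<le> Gb"
    and Sb: "\<bar>\<Sum>i\<in>UNIV. \<Sum>j\<in>UNIV. \<bar>dist2_hhess q x0 i j\<bar>\<bar> \<le> Sb"
    and bB: "\<And>\<alpha>. norm (b \<alpha> x0) \<le> B"
    and k: "L * Sb + 2 * B * Gb < 4 * k * l * g0^2" "k > 0" and \<delta>: "\<delta> > 0" and e: "e > 0"
    and touch: "\<forall>y\<in>ball x0 e. u y - (C0 + (-\<delta>) * exp (- k * ((y - q) \<bullet> (y - q))))
                  \<le> u x0 - (C0 + (-\<delta>) * exp (- k * ((x0 - q) \<bullet> (x0 - q))))"
  shows False
proof -
  define ex where "ex = exp (- k * ((x0 - q) \<bullet> (x0 - q)))"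
  have "\<delta> * ex * (4 * k * k * l * g0^2 - k * L * Sb) + - (B * (2 * \<delta> * k * ex * Gb)) \<le> 0"
  proof (rule visc_sub_touching_bound[OF sub C2_with_hopf_barrier e touch lpos lL])
    show "\<delta> * ex * (4 * k * k * l * g0^2 - k * L * Sb)
          \<le> trace (- (A ** symm (hhess_of (hopf_barrier_grad q \<delta> k) (hopf_barrier_hess q \<delta> k) x0)))"
      if "pucci_adm l L A" for A
      using trace_hhess_hopf_barrier_ge[OF that lpos lL _ _ _ g0(2) Sb] \<delta> k g0 unfolding ex_def by simp
    show "- (B * (2 * \<delta> * k * ex * Gb)) \<le> c \<alpha> x0 * u x0 - b \<alpha> x0 \<bullet> hgrad_of (hopf_barrier_grad q \<delta> k) x0"
      for \<alpha>
    proof -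
      have "b \<alpha> x0 \<bullet> hgrad_of (hopf_barrier_grad q \<delta> k) x0
          \<le> norm (b \<alpha> x0) * (2 * \<delta> * k * ex * norm (hradial q x0))"
        using norm_cauchy_schwarz[of "b \<alpha> x0" "hgrad_of (hopf_barrier_grad q \<delta> k) x0"] \<delta> k
        unfolding hgrad_hopf_barrier ex_def by simp
      also have "\<dots> \<le> B * (2 * \<delta> * k * ex * Gb)"
        using bB[of \<alpha>] Gb \<delta> k unfolding ex_def
        by (intro mult_mono mult_left_mono) (auto intro: order_trans[OF norm_ge_zero])
      finally show ?thesis using cu[of \<alpha>] by linarith
    qed
  qed
  moreover have "0 < (\<delta> * ex * k) * (4 * k * l * g0^2 - L * Sb - 2 * B * Gb)"
    using \<delta> k unfolding ex_def by simp
  ultimately show False by (simp add: algebra_simps)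
qed

lemma usc_compact_gap:
  assumes "usc u" "compact S" "\<And>x. x \<in> S \<Longrightarrow> u x < M"
  obtains \<gamma> where "\<gamma> > 0" "\<And>x. x \<in> S \<Longrightarrow> u x \<le> M - \<gamma>"
proof (cases "S = {}")
  case True then show ?thesis using that[of 1] by auto
next
  case False
  obtain xm where "xm \<in> S" "\<forall>x\<in>S. u x \<le> u xm" using usc_attains_max[OF assms(1,2) False] by blast
  then show ?thesis using that[of "M - u xm"] assms(3) by force
qed

lemma continuous_bounded_cball:
  fixes f :: "'n::euclidean_space \<Rightarrow> real"
  assumes "continuous_on UNIV f"
  shows "\<exists>S. \<forall>x\<in>cball z r. \<bar>f x\<bar> \<le> S"
proof -
  have "compact (f ` cball z r)"
    by (rule compact_continuous_image[OF continuous_on_subset[OF assms] compact_cball]) simp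
  then have "bounded (f ` cball z r)" by (rule compact_imp_bounded)
  then obtain S where "\<forall>y\<in>f ` cball z r. norm y \<le> S" unfolding bounded_iff by blast
  then show ?thesis by auto
qed

text \<open>The Hopf barrier \<open>M + \<delta> (exp (-k R\<^sup>2) - exp (-k |x - q|\<^sup>2))\<close>, with \<open>R = |z - q|\<close>, vanishes
  on the sphere through \<open>z\<close>; it stays above \<open>u\<close> outside that sphere and, thanks to the gap \<open>\<gamma>\<close>,
  on the part of a small sphere around \<open>z\<close> inside it.\<close>

lemma hopf_barrier_max_interior:
  fixes u :: "('d::finite) pt \<Rightarrow> real" and z q :: "'d pt" and M k \<gamma> :: real
  defines "\<phi> \<equiv> \<lambda>x. (M + (\<gamma>/2) * exp (- k * (norm (z - q))^2)) + (-(\<gamma>/2)) * exp (- k * ((x - q) \<bullet> (x - q)))"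
  assumes usc: "usc u" and uM: "\<And>x. u x \<le> M" and uz: "u z = M" and \<rho>0: "\<rho>0 > 0" and k: "k > 0"
    and \<gamma>: "\<gamma> > 0" "\<And>x. x \<in> sphere z \<rho>0 \<Longrightarrow> norm (x - q) \<le> norm (z - q) \<Longrightarrow> u x \<le> M - \<gamma>"
  obtains x0 where "dist z x0 < \<rho>0" "\<forall>x\<in>cball z \<rho>0. u x - \<phi> x \<le> u x0 - \<phi> x0"
proof -
  define R where "R = norm (z - q)"
  define w0 where "w0 = exp (- k * R^2)"
  have usc_diff: "usc (\<lambda>x. u x - \<phi> x)"
    unfolding \<phi>_def by (rule usc_diff_continuous[OF usc C2_with_continuous[OF C2_with_hopf_barrier]])
  obtain x0 where x0: "x0 \<in> cball z \<rho>0" "\<forall>x\<in>cball z \<rho>0. u x - \<phi> x \<le> u x0 - \<phi> x0"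
    using usc_attains_max[OF usc_diff compact_cball, of z \<rho>0] \<rho>0 by auto
  have "z \<in> cball z \<rho>0" using \<rho>0 by simp
  then have "u z - \<phi> z \<le> u x0 - \<phi> x0" using x0(2) by blast
  moreover have "u z - \<phi> z = 0" using uz unfolding \<phi>_def by (simp add: power2_norm_eq_inner)
  ultimately have \<Psi>0: "u x0 - \<phi> x0 \<ge> 0" by simp
  have "dist z x0 < \<rho>0"
  proof (rule ccontr)
    assume "\<not> dist z x0 < \<rho>0"
    then have x0_sphere: "x0 \<in> sphere z \<rho>0" using x0(1) by simp
    show False
    proof (cases "norm (x0 - q) \<le> R")
      case True
      then have "u x0 \<le> M - \<gamma>" using \<gamma>(2) x0_sphere unfolding R_def by simp
      moreover have "(\<gamma>/2) * exp (- k * ((x0 - q) \<bullet> (x0 - q))) \<le> \<gamma>/2" using \<gamma>(1) k by simp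
      moreover have "0 \<le> (\<gamma>/2) * w0" using \<gamma>(1) unfolding w0_def by simp
      ultimately show False using \<Psi>0 \<gamma>(1) unfolding \<phi>_def w0_def R_def by simp
    next
      case False
      then have "R^2 < (x0 - q) \<bullet> (x0 - q)"
        using power_strict_mono[of R "norm (x0 - q)" 2] unfolding R_def by (simp add: power2_norm_eq_inner)
      then have "(\<gamma>/2) * exp (- k * ((x0 - q) \<bullet> (x0 - q))) < (\<gamma>/2) * w0"
        using \<gamma>(1) k unfolding w0_def by simp
      then show False using \<Psi>0 uM[of x0] unfolding \<phi>_def w0_def R_def by simp
    qed
  qed
  then show ?thesis using that x0(2) by blast
qed

lemma hopf_barrier_ball_absurd:
  fixes b :: "'a \<Rightarrow> ('d::finite) pt \<Rightarrow> 'd hz" and c :: "'a \<Rightarrow> 'd pt \<Rightarrow> real" and u :: "'d pt \<Rightarrow> real"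
  assumes sub: "visc_sub (\<lambda>x r p M. pucci_minus l L M + (INF \<alpha>. c \<alpha> x * r - b \<alpha> x \<bullet> p)) u"
    and lpos: "0 < l" and lL: "l \<le> L"
    and cu: "\<And>\<alpha> x. c \<alpha> x * u x \<ge> 0"
    and uM: "\<And>x. u x \<le> M" and uz: "u z = M"
    and \<rho>0: "\<rho>0 > 0"
    and g0: "0 < g0" and g0_le: "\<And>x. x \<in> cball z \<rho>0 \<Longrightarrow> g0 \<le> norm (hradial q x)"
    and Gb: "\<And>x. x \<in> cball z \<rho>0 \<Longrightarrow> norm (hradial q x) \<le> Gb"
    and Sb: "\<And>x. x \<in> cball z \<rho>0 \<Longrightarrow> \<bar>\<Sum>i\<in>UNIV. \<Sum>j\<in>UNIV. \<bar>dist2_hhess q x i j\<bar>\<bar> \<le> Sb"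
    and bB: "\<And>\<alpha> x. x \<in> cball z \<rho>0 \<Longrightarrow> norm (b \<alpha> x) \<le> B"
    and \<gamma>: "\<gamma> > 0" "\<And>x. x \<in> sphere z \<rho>0 \<Longrightarrow> norm (x - q) \<le> norm (z - q) \<Longrightarrow> u x \<le> M - \<gamma>"
  shows False
proof -
  have usc: "usc u" using sub unfolding visc_sub_def by blast
  define k where "k = max 1 ((\<bar>L * Sb\<bar> + \<bar>2 * B * Gb\<bar> + 1) / (4 * l * g0^2))"
  have k: "L * Sb + 2 * B * Gb < 4 * k * l * g0^2" "k > 0"
  proof -
    have "(\<bar>L * Sb\<bar> + \<bar>2 * B * Gb\<bar> + 1) / (4 * l * g0^2) \<le> k" unfolding k_def by simp
    then have "\<bar>L * Sb\<bar> + \<bar>2 * B * Gb\<bar> + 1 \<le> k * (4 * l * g0^2)"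
      using lpos g0 by (simp add: pos_divide_le_eq)
    then show "L * Sb + 2 * B * Gb < 4 * k * l * g0^2" by (simp add: mult_ac)
  qed (simp add: k_def)
  define \<phi> where
    "\<phi> = (\<lambda>x. (M + (\<gamma>/2) * exp (- k * (norm (z - q))^2)) + (-(\<gamma>/2)) * exp (- k * ((x - q) \<bullet> (x - q))))"
  obtain x0 where x0: "dist z x0 < \<rho>0" "\<forall>x\<in>cball z \<rho>0. u x - \<phi> x \<le> u x0 - \<phi> x0"
    using hopf_barrier_max_interior[OF usc uM uz \<rho>0 k(2) \<gamma>] unfolding \<phi>_def by blast
  define e where "e = \<rho>0 - dist z x0"
  have "ball x0 e \<subseteq> cball z \<rho>0"
  proof
    fix y assume "y \<in> ball x0 e"
    then show "y \<in> cball z \<rho>0" using dist_triangle[of z y x0] unfolding e_def by simp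
  qed
  then have touch: "\<forall>y\<in>ball x0 e. u y - \<phi> y \<le> u x0 - \<phi> x0" using x0(2) by blast
  have "x0 \<in> cball z \<rho>0" using x0(1) by simp
  then show False
    using hopf_barrier_touching_absurd[OF sub lpos lL cu g0 g0_le Gb Sb bB k _ _ touch[unfolded \<phi>_def]]
      \<gamma>(1) x0(1) unfolding e_def by simp
qed

lemma continuous_norm_half_lower_bound:
  fixes f :: "'a::metric_space \<Rightarrow> 'b::real_normed_vector"
  assumes "continuous_on UNIV f"
  obtains \<rho> where "\<rho> > 0" "\<And>x. x \<in> cball z \<rho> \<Longrightarrow> norm (f z) / 2 \<le> norm (f x)"
proof (cases "f z = 0")
  case True
  then show ?thesis using that[of 1] by simp
next
  case False
  then obtain \<rho>1 where \<rho>1: "\<rho>1 > 0" "\<And>x. dist x z < \<rho>1 \<Longrightarrow> dist (f x) (f z) < norm (f z) / 2"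
    using assms unfolding continuous_on_iff by (metis UNIV_I half_gt_zero zero_less_norm_iff)
  have "norm (f z) / 2 \<le> norm (f x)" if "x \<in> cball z (\<rho>1 / 2)" for x
  proof -
    have "dist x z < \<rho>1" using that \<rho>1(1) by (simp add: dist_commute)
    then have "dist (f x) (f z) < norm (f z) / 2" by (rule \<rho>1(2))
    then show ?thesis using norm_triangle_sub[of "f z" "f x"] by (simp add: dist_norm norm_minus_commute)
  qed
  then show ?thesis using that[of "\<rho>1 / 2"] \<rho>1(1) by simp
qed

lemma hopf_tangency_closed_ball:
  fixes b :: "'a \<Rightarrow> ('d::finite) pt \<Rightarrow> 'd hz" and c :: "'a \<Rightarrow> 'd pt \<Rightarrow> real" and u :: "'d pt \<Rightarrow> real"
  assumes sub: "visc_sub (\<lambda>x r p M. pucci_minus l L M + (INF \<alpha>. c \<alpha> x * r - b \<alpha> x \<bullet> p)) u"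
    and lpos: "0 < l" and lL: "l \<le> L"
    and Hi_fin: "\<forall>x r p. bdd_below (range (\<lambda>\<alpha>. c \<alpha> x * r - b \<alpha> x \<bullet> p))"
    and b_lip: "\<forall>R>0. \<exists>K. \<forall>\<alpha> x y. norm x \<le> R \<longrightarrow> norm y \<le> R \<longrightarrow>
                   norm (b \<alpha> x - b \<alpha> y) \<le> K * norm (x - y)"
    and cu: "\<And>\<alpha> x. c \<alpha> x * u x \<ge> 0"
    and uM: "\<And>x. u x \<le> M" and uz: "u z = M"
    and inside: "\<And>x. x \<noteq> z \<Longrightarrow> norm (x - q) \<le> norm (z - q) \<Longrightarrow> u x < M"
  shows "hradial q z = 0"
proof (rule ccontr)
  assume nz: "hradial q z \<noteq> 0"
  have usc: "usc u" using sub unfolding visc_sub_def by blast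
  define R where "R = norm (z - q)"
  define g0 where "g0 = norm (hradial q z) / 2"
  have g0: "g0 > 0" unfolding g0_def using nz by simp
  obtain \<rho>0 where \<rho>0: "\<rho>0 > 0" and g0_le: "\<And>x. x \<in> cball z \<rho>0 \<Longrightarrow> g0 \<le> norm (hradial q x)"
    using continuous_norm_half_lower_bound[OF continuous_hradial] unfolding g0_def by metis
  obtain Sb where Sb: "\<And>x. x \<in> cball z \<rho>0 \<Longrightarrow> \<bar>\<Sum>i\<in>UNIV. \<Sum>j\<in>UNIV. \<bar>dist2_hhess q x i j\<bar>\<bar> \<le> Sb"
  proof -
    have "continuous_on UNIV (\<lambda>x. \<Sum>i\<in>UNIV. \<Sum>j\<in>UNIV. \<bar>dist2_hhess q x i j\<bar>)"
      by (intro continuous_intros continuous_dist2_hhess)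
    then show ?thesis using continuous_bounded_cball that by blast
  qed
  obtain Gb where Gb: "\<And>x. x \<in> cball z \<rho>0 \<Longrightarrow> \<bar>norm (hradial q x)\<bar> \<le> Gb"
  proof -
    have "continuous_on UNIV (\<lambda>x. norm (hradial q x))" by (intro continuous_intros continuous_hradial)
    then show ?thesis using continuous_bounded_cball that by blast
  qed
  obtain B where B: "\<And>\<alpha> x. norm x \<le> norm z + \<rho>0 \<Longrightarrow> norm (b \<alpha> x) \<le> B"
    using b_bounded[OF Hi_fin b_lip] by blast
  have bB: "norm (b \<alpha> x) \<le> B" if "x \<in> cball z \<rho>0" for \<alpha> x
    using B[of x] norm_triangle_sub[of x z] that by (simp add: dist_norm norm_minus_commute)
  define Sph where "Sph = sphere z \<rho>0 \<inter> cball q R"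
  have Sph_compact: "compact Sph" unfolding Sph_def by (intro compact_Int_closed compact_sphere closed_cball)
  have Sph_below: "u x < M" if "x \<in> Sph" for x
  proof (rule inside)
    show "x \<noteq> z" using that \<rho>0 unfolding Sph_def by auto
    show "norm (x - q) \<le> norm (z - q)"
      using that unfolding Sph_def R_def by (simp add: dist_norm norm_minus_commute)
  qed
  obtain \<gamma> where \<gamma>: "\<gamma> > 0" "\<And>x. x \<in> Sph \<Longrightarrow> u x \<le> M - \<gamma>"
    using usc_compact_gap[OF usc Sph_compact Sph_below] by auto
  show False
  proof (rule hopf_barrier_ball_absurd[OF sub lpos lL cu uM uz \<rho>0 g0 g0_le _ Sb bB \<gamma>(1)])
    show "norm (hradial q x) \<le> Gb" if "x \<in> cball z \<rho>0" for x using Gb[OF that] by simp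
    show "u x \<le> M - \<gamma>" if "x \<in> sphere z \<rho>0" "norm (x - q) \<le> norm (z - q)" for x
      using \<gamma>(2) that unfolding Sph_def R_def by (simp add: dist_norm norm_minus_commute)
  qed
qed
lemma midpoint_ball_sum_sq:
  fixes q z x :: "'n::real_inner"
  assumes "norm (x - (1/2) *\<^sub>R (q + z)) \<le> norm (z - q) / 2"
  shows "(norm (x - q))^2 + (norm (x - z))^2 \<le> (norm (z - q))^2"
proof -
  define a where "a = x - (1/2) *\<^sub>R (q + z)"
  define w where "w = (1/2) *\<^sub>R (z - q)"
  have hv: "(1/2) *\<^sub>R v + (1/2) *\<^sub>R v = v" for v :: 'n by (simp add: scaleR_add_left[symmetric])
  have xq: "x - q = a + w" unfolding a_def w_def by (simp add: algebra_simps hv)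
  have xz: "x - z = a - w" unfolding a_def w_def by (simp add: algebra_simps hv)
  have "(norm (x - q))^2 + (norm (x - z))^2 = 2 * (norm a)^2 + 2 * (norm w)^2"
    unfolding xq xz power2_norm_eq_inner by (simp add: inner_add inner_diff inner_commute algebra_simps)
  also have "(norm w)^2 = (norm (z - q))^2 / 4" unfolding w_def by (simp add: power2_eq_square)
  also have "(norm a)^2 \<le> (norm (z - q) / 2)^2" using assms unfolding a_def by (intro power_mono) auto
  then have "2 * (norm a)^2 \<le> (norm (z - q))^2 / 2" by (simp add: power2_eq_square)
  finally show ?thesis by simp
qed

lemma hopf_tangency:
  fixes b :: "'a \<Rightarrow> ('d::finite) pt \<Rightarrow> 'd hz" and c :: "'a \<Rightarrow> 'd pt \<Rightarrow> real" and u :: "'d pt \<Rightarrow> real"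
  assumes sub: "visc_sub (\<lambda>x r p M. pucci_minus l L M + (INF \<alpha>. c \<alpha> x * r - b \<alpha> x \<bullet> p)) u"
    and lpos: "0 < l" and lL: "l \<le> L"
    and Hi_fin: "\<forall>x r p. bdd_below (range (\<lambda>\<alpha>. c \<alpha> x * r - b \<alpha> x \<bullet> p))"
    and b_lip: "\<forall>R>0. \<exists>K. \<forall>\<alpha> x y. norm x \<le> R \<longrightarrow> norm y \<le> R \<longrightarrow>
                   norm (b \<alpha> x - b \<alpha> y) \<le> K * norm (x - y)"
    and cu: "\<And>\<alpha> x. c \<alpha> x * u x \<ge> 0"
    and uM: "\<And>x. u x \<le> M" and uz: "u z = M"
    and inside: "\<And>y. dist y q < dist q z \<Longrightarrow> u y < M"
  shows "(z - q) \<bullet> hfield i z = 0"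
proof -
  define q' where "q' = (1/2) *\<^sub>R (q + z)"
  have zq': "z - q' = (1/2) *\<^sub>R (z - q)"
    unfolding q'_def by (simp add: algebra_simps scaleR_add_left[symmetric])
  have "hradial q' z = 0"
  proof (rule hopf_tangency_closed_ball[OF sub lpos lL Hi_fin b_lip cu uM uz])
    fix x assume xz: "x \<noteq> z" and "norm (x - q') \<le> norm (z - q')"
    then have "norm (x - q') \<le> norm (z - q) / 2" unfolding zq' by simp
    then have "(norm (x - q))^2 + (norm (x - z))^2 \<le> (norm (z - q))^2"
      using midpoint_ball_sum_sq[of x q z] unfolding q'_def by simp
    moreover have "(norm (x - z))^2 > 0" using xz by simp
    ultimately have "(norm (x - q))^2 < (norm (z - q))^2" by linarith
    then have "norm (x - q) < norm (z - q)" by (rule power2_less_imp_less) simp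
    then show "u x < M" by (intro inside) (simp add: dist_norm norm_minus_commute)
  qed
  then have "(z - q') \<bullet> hfield i z = 0" unfolding hradial_def vec_eq_iff by simp
  then show ?thesis unfolding zq' by simp
qed

section \<open>Sets with horizontal tangency are invariant under the horizontal lines\<close>

definition hpartner :: "('d::finite) + 'd \<Rightarrow> 'd + 'd + unit" where
  "hpartner i = (case i of Inl k \<Rightarrow> Inr (Inl k) | Inr k \<Rightarrow> Inl k)"

definition hsign :: "('d::finite) + 'd \<Rightarrow> real" where
  "hsign i = (case i of Inl k \<Rightarrow> 1 | Inr k \<Rightarrow> -1)"

lemma hfield_alt: "hfield i y = axis (hidx i) 1 + (2 * hsign i * y $ hpartner i) *\<^sub>R taxis"
  by (cases i) (auto simp: hfield_def hidx_def hsign_def hpartner_def taxis_def)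

lemma hfield_hpartner: "hfield i x $ hpartner i = 0"
  by (cases i) (auto simp: hfield_def hpartner_def axis_def)

lemma hpartner_neq_t: "hpartner i \<noteq> Inr (Inr ())"
  by (cases i) (auto simp: hpartner_def)

lemma hfield_along_line: "hfield i (x + s *\<^sub>R hfield i x) = hfield i x"
proof -
  have e: "(x + s *\<^sub>R hfield i x) $ hpartner i = x $ hpartner i" using hfield_hpartner[of i x] by simp
  have "hfield i (x + s *\<^sub>R hfield i x)
        = axis (hidx i) 1 + (2 * hsign i * (x + s *\<^sub>R hfield i x) $ hpartner i) *\<^sub>R taxis"
    by (rule hfield_alt)
  also have "\<dots> = hfield i x" unfolding e by (rule hfield_alt[symmetric])
  finally show ?thesis .
qed

lemma abs_two_coords_le_norm:
  assumes "p \<noteq> t"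
  shows "\<bar>2 * (w $ p) * (w $ t)\<bar> \<le> (norm (w :: real^'n::finite))^2"
proof -
  have "(w$p)^2 + (w$t)^2 = (\<Sum>j\<in>{p,t}. (w$j)^2)" using assms by simp
  also have "\<dots> \<le> (\<Sum>j\<in>UNIV. (w$j)^2)" by (rule sum_mono2) auto
  also have "\<dots> = w \<bullet> w" by (simp add: inner_vec_def power2_eq_square)
  also have "\<dots> = (norm w)^2" by (simp add: power2_norm_eq_inner)
  finally have a: "(w$p)^2 + (w$t)^2 \<le> (norm w)^2" .
  have "\<bar>2 * (w $ p) * (w $ t)\<bar> \<le> (w$p)^2 + (w$t)^2"
    using sum_squares_bound[of "w$p" "w$t"] abs_le_square_iff
    by (smt (verit, ccfv_SIG) power2_diff power2_sum zero_le_power2)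
  then show ?thesis using a by linarith
qed

lemma one_plus_div_power_le_exp:
  assumes "a \<ge> 0" "n > 0"
  shows "(1 + a / real n) ^ n \<le> exp a"
proof -
  have "1 + a / real n \<le> exp (a / real n)" by (rule exp_ge_add_one_self)
  then have "(1 + a / real n) ^ n \<le> exp (a / real n) ^ n" using assms by (intro power_mono) auto
  also have "\<dots> = exp (real n * (a / real n))" by (rule exp_of_nat_mult[symmetric])
  also have "\<dots> = exp a" using assms by simp
  finally show ?thesis .
qed

lemma norm_add_scaleR_pow2:
  "(norm (w + h *\<^sub>R v))^2 = (norm w)^2 + 2 * h * (w \<bullet> v) + h^2 * (norm (v::'a::real_inner))^2"
  unfolding power2_norm_eq_inner
  by (simp add: inner_add_left inner_add_right inner_commute[of v w] power2_eq_square algebra_simps)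

lemma abs_inner_hfield_diff_le: "\<bar>(q - z) \<bullet> (hfield i q - hfield i z)\<bar> \<le> (norm (q - z))^2"
proof -
  have diff: "hfield i q - hfield i z = (2 * hsign i * (q $ hpartner i - z $ hpartner i)) *\<^sub>R taxis"
    unfolding hfield_alt[of i q] hfield_alt[of i z] by (simp add: algebra_simps)
  have "(q - z) \<bullet> (hfield i q - hfield i z)
        = hsign i * (2 * (q - z) $ hpartner i * (q - z) $ Inr (Inr ()))"
    unfolding diff by (simp add: taxis_def inner_axis algebra_simps)
  moreover have "\<bar>hsign i\<bar> = 1" by (cases i) (simp_all add: hsign_def)
  ultimately show ?thesis
    using abs_two_coords_le_norm[OF hpartner_neq_t[of i], of "q - z"] by (simp add: abs_mult)
qed

text \<open>Along the line the field is constant, \<open>V = X\<^sub>i(q)\<close>; tangency at a nearest point \<open>z \<in> F\<close>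
  turns \<open>(q - z) \<cdot> V\<close> into \<open>(q - z) \<cdot> (X\<^sub>i(q) - X\<^sub>i(z))\<close>, which is quadratic in \<open>|q - z|\<close>.\<close>

lemma sq_infdist_hfield_line_step:
  fixes F :: "('d::finite) pt set" and x :: "'d pt"
  assumes F: "closed F" "F \<noteq> {}"
    and tangency: "\<And>q z. q \<notin> F \<Longrightarrow> z \<in> F \<Longrightarrow> (\<forall>y. dist y q < dist q z \<longrightarrow> y \<notin> F)
                      \<Longrightarrow> (z - q) \<bullet> hfield i z = 0"
  defines "D \<equiv> \<lambda>s. (infdist (x + s *\<^sub>R hfield i x) F)^2"
  shows "D (s + h) \<le> D s * (1 + 2 * \<bar>h\<bar>) + h^2 * (norm (hfield i x))^2"
proof -
  define V where "V = hfield i x"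
  define q where "q = x + s *\<^sub>R V"
  have q_shift: "x + (s + h) *\<^sub>R V = q + h *\<^sub>R V" unfolding q_def by (simp add: algebra_simps)
  obtain z where z: "z \<in> F" "\<And>y. y \<in> F \<Longrightarrow> dist q z \<le> dist q y"
    using distance_attains_inf[OF F, of q] by blast
  have "infdist q F = dist q z"
  proof (rule antisym)
    show "infdist q F \<le> dist q z" by (rule infdist_le[OF z(1)])
    have "dist q z \<le> (INF y\<in>F. dist q y)" using F(2) z(2) by (intro cINF_greatest) auto
    then show "dist q z \<le> infdist q F" unfolding infdist_def using F(2) by simp
  qed
  then have Dq: "D s = (norm (q - z))^2"
    unfolding D_def V_def[symmetric] q_def[symmetric] by (simp add: dist_norm)
  have "\<bar>(q - z) \<bullet> V\<bar> \<le> (norm (q - z))^2"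
  proof (cases "q \<in> F")
    case True
    then have "q = z" using z(2)[of q] by simp
    then show ?thesis by simp
  next
    case False
    have "\<forall>y. dist y q < dist q z \<longrightarrow> y \<notin> F" using z(2) by (force simp: dist_commute)
    then have "(z - q) \<bullet> hfield i z = 0" by (rule tangency[OF False z(1)])
    moreover have "hfield i q = V" unfolding q_def V_def by (rule hfield_along_line)
    ultimately have "(q - z) \<bullet> V = (q - z) \<bullet> (hfield i q - hfield i z)"
      by (simp add: inner_diff_right inner_diff_left inner_commute)
    then show ?thesis using abs_inner_hfield_diff_le[of q z i] by simp
  qed
  then have "2 * \<bar>h\<bar> * \<bar>(q - z) \<bullet> V\<bar> \<le> 2 * \<bar>h\<bar> * D s"
    unfolding Dq by (intro mult_left_mono) auto
  moreover have "2 * h * ((q - z) \<bullet> V) \<le> 2 * \<bar>h\<bar> * \<bar>(q - z) \<bullet> V\<bar>"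
    by (metis abs_ge_self abs_mult abs_numeral mult.assoc)
  ultimately have "2 * h * ((q - z) \<bullet> V) \<le> 2 * \<bar>h\<bar> * D s" by linarith
  moreover have "(infdist (q + h *\<^sub>R V) F)^2 \<le> (dist (q + h *\<^sub>R V) z)^2"
    by (rule power_mono[OF infdist_le[OF z(1)] infdist_nonneg])
  then have "D (s + h) \<le> (norm (q + h *\<^sub>R V - z))^2"
    unfolding D_def V_def[symmetric] q_shift dist_norm .
  moreover have "(norm (q + h *\<^sub>R V - z))^2 = D s + 2 * h * ((q - z) \<bullet> V) + h^2 * (norm V)^2"
    using norm_add_scaleR_pow2[of "q - z" h V] unfolding Dq by (simp add: diff_add_eq)
  moreover have "D s * (1 + 2 * \<bar>h\<bar>) = D s + 2 * \<bar>h\<bar> * D s" by (simp add: algebra_simps)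
  ultimately show ?thesis unfolding V_def by linarith
qed

lemma zero_of_discrete_gronwall:
  fixes D :: "real \<Rightarrow> real"
  assumes D0: "D 0 = 0" and nonneg: "\<And>s. D s \<ge> 0" and C: "C \<ge> 0"
    and step: "\<And>s h. D (s + h) \<le> D s * (1 + 2 * \<bar>h\<bar>) + h^2 * C"
  shows "D S = 0"
proof -
  have iter: "D (real j * h) \<le> real j * h^2 * C * (1 + 2 * \<bar>h\<bar>) ^ j" for j h
  proof (induction j)
    case 0 then show ?case using D0 by simp
  next
    case (Suc j)
    have "1 \<le> (1 + 2 * \<bar>h\<bar>) ^ Suc j" by (rule one_le_power) simp
    then have "h^2 * C * 1 \<le> h^2 * C * (1 + 2 * \<bar>h\<bar>) ^ Suc j" using C by (intro mult_left_mono) auto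
    moreover have "D (real j * h) * (1 + 2 * \<bar>h\<bar>)
                   \<le> (real j * h^2 * C * (1 + 2 * \<bar>h\<bar>) ^ j) * (1 + 2 * \<bar>h\<bar>)"
      by (rule mult_right_mono[OF Suc.IH]) simp
    then have "D (real j * h + h) \<le> (real j * h^2 * C * (1 + 2 * \<bar>h\<bar>) ^ j) * (1 + 2 * \<bar>h\<bar>) + h^2 * C"
      using step[of "real j * h" h] by linarith
    ultimately show ?case by (simp add: algebra_simps)
  qed
  have bound: "D S \<le> S^2 * C * exp (2 * \<bar>S\<bar>) / real n" if n: "n > 0" for n :: nat
  proof -
    have "D S = D (real n * (S / real n))" using n by simp
    also have "\<dots> \<le> real n * (S / real n)^2 * C * (1 + 2 * \<bar>S / real n\<bar>) ^ n" by (rule iter)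
    also have "1 + 2 * \<bar>S / real n\<bar> = 1 + (2 * \<bar>S\<bar>) / real n" by (simp add: abs_divide)
    also have "real n * (S / real n)^2 * C * (1 + (2 * \<bar>S\<bar>) / real n) ^ n
        \<le> real n * (S / real n)^2 * C * exp (2 * \<bar>S\<bar>)"
      using one_plus_div_power_le_exp[of "2 * \<bar>S\<bar>" n] n C by (intro mult_left_mono) auto
    also have "\<dots> = S^2 * C * exp (2 * \<bar>S\<bar>) / real n"
      using n by (simp add: power2_eq_square field_simps)
    finally show ?thesis .
  qed
  show ?thesis
  proof (rule ccontr)
    assume "D S \<noteq> 0"
    then have Dp: "D S > 0" using nonneg[of S] by simp
    obtain n :: nat where n: "real n > S^2 * C * exp (2 * \<bar>S\<bar>) / D S"
      using reals_Archimedean2 by blast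
    moreover have "0 \<le> S^2 * C * exp (2 * \<bar>S\<bar>) / D S" using C Dp by simp
    ultimately have "real n > 0" by linarith
    then have "n > 0" by simp
    have "S^2 * C * exp (2 * \<bar>S\<bar>) < real n * D S" using n Dp by (simp add: pos_divide_less_eq)
    moreover have "D S * real n \<le> S^2 * C * exp (2 * \<bar>S\<bar>)"
      using bound[OF \<open>n > 0\<close>] \<open>n > 0\<close> by (simp add: pos_le_divide_eq)
    ultimately show False by (simp add: mult.commute)
  qed
qed

lemma line_invariant_of_tangency:
  fixes F :: "('d::finite) pt set"
  assumes F: "closed F" and xF: "x \<in> F"
    and tangency: "\<And>q z. q \<notin> F \<Longrightarrow> z \<in> F \<Longrightarrow> (\<forall>y. dist y q < dist q z \<longrightarrow> y \<notin> F)
                      \<Longrightarrow> (z - q) \<bullet> hfield i z = 0"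
  shows "x + S *\<^sub>R hfield i x \<in> F"
proof -
  have Fne: "F \<noteq> {}" using xF by blast
  define D where "D s = (infdist (x + s *\<^sub>R hfield i x) F)^2" for s
  have "D S = 0"
  proof (rule zero_of_discrete_gronwall[where D = D and C = "(norm (hfield i x))^2"])
    show "D 0 = 0" unfolding D_def using xF by simp
    show "0 \<le> D s" for s unfolding D_def by simp
    show "D (s + h) \<le> D s * (1 + 2 * \<bar>h\<bar>) + h^2 * (norm (hfield i x))^2" for s h
      unfolding D_def by (rule sq_infdist_hfield_line_step[OF F Fne tangency])
  qed simp
  then show ?thesis using in_closed_iff_infdist_zero[OF F Fne] unfolding D_def by simp
qed

text \<open>The loop along \<open>X\<^sub>k, X\<^sub>k\<^sub>+\<^sub>d, -X\<^sub>k, -X\<^sub>k\<^sub>+\<^sub>d\<close> with step lengths \<open>1\<close> and \<open>-\<tau>/4\<close> moves only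
  the \<open>t\<close>-coordinate, by \<open>\<tau>\<close>: this is the commutator \<open>[X\<^sub>k, X\<^sub>k\<^sub>+\<^sub>d] = -4 \<partial>\<^sub>t\<close>.\<close>

lemma line_invariant_t_shift:
  fixes F :: "('d::finite) pt set"
  assumes inv: "\<And>x i s. x \<in> F \<Longrightarrow> x + s *\<^sub>R hfield i x \<in> F" and xF: "x \<in> F"
  shows "x + \<tau> *\<^sub>R taxis \<in> F"
proof -
  obtain k0 :: 'd where True by simp
  define a :: real where "a = 1"
  define b :: real where "b = - \<tau> / 4"
  define x1 where "x1 = x + a *\<^sub>R hfield (Inl k0) x"
  define x2 where "x2 = x1 + b *\<^sub>R hfield (Inr k0) x1"
  define x3 where "x3 = x2 + (-a) *\<^sub>R hfield (Inl k0) x2"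
  define x4 where "x4 = x3 + (-b) *\<^sub>R hfield (Inr k0) x3"
  have "x4 \<in> F" unfolding x4_def x3_def x2_def x1_def by (intro inv xF)
  moreover have "x4 = x + \<tau> *\<^sub>R taxis"
    unfolding x4_def x3_def x2_def x1_def
    by (simp add: vec_eq_iff hfield_def taxis_def axis_def a_def b_def algebra_simps split: sum.split)
  ultimately show ?thesis by simp
qed

lemma line_invariant_hidx_shift:
  fixes F :: "('d::finite) pt set"
  assumes inv: "\<And>x i s. x \<in> F \<Longrightarrow> x + s *\<^sub>R hfield i x \<in> F" and xF: "x \<in> F"
  shows "x + s *\<^sub>R axis (hidx i) 1 \<in> F"
proof -
  define \<tau> where "\<tau> = - (2 * hsign i * x $ hpartner i * s)"
  have "(x + s *\<^sub>R hfield i x) + \<tau> *\<^sub>R taxis \<in> F" by (rule line_invariant_t_shift[OF inv inv[OF xF]])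
  moreover have "(x + s *\<^sub>R hfield i x) + \<tau> *\<^sub>R taxis = x + s *\<^sub>R axis (hidx i) 1"
    unfolding \<tau>_def hfield_alt[of i x] by (simp add: algebra_simps)
  ultimately show ?thesis by simp
qed

lemma line_invariant_axis_shift:
  fixes F :: "('d::finite) pt set"
  assumes inv: "\<And>x i s. x \<in> F \<Longrightarrow> x + s *\<^sub>R hfield i x \<in> F" and xF: "x \<in> F"
  shows "x + s *\<^sub>R axis j 1 \<in> F"
proof (cases j)
  case (Inl k)
  then have "j = hidx (Inl k)" by (simp add: hidx_def)
  then show ?thesis using line_invariant_hidx_shift[OF inv xF] by simp
next
  case (Inr j')
  show ?thesis
  proof (cases j')
    case (Inl k)
    then have "j = hidx (Inr k)" using Inr by (simp add: hidx_def)
    then show ?thesis using line_invariant_hidx_shift[OF inv xF] by simp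
  next
    case (Inr u)
    then have "axis j 1 = (taxis :: 'd pt)" using \<open>j = Inr j'\<close> by (simp add: taxis_def)
    then show ?thesis using line_invariant_t_shift[OF inv xF] by simp
  qed
qed

lemma line_invariant_UNIV:
  fixes F :: "('d::finite) pt set"
  assumes inv: "\<And>x i s. x \<in> F \<Longrightarrow> x + s *\<^sub>R hfield i x \<in> F" and xF: "x0 \<in> F"
  shows "y \<in> F"
proof -
  have fin: "x0 + (\<Sum>j\<in>S. (y $ j - x0 $ j) *\<^sub>R axis j 1) \<in> F" if "finite S" for S
    using that
  proof (induction S rule: finite_induct)
    case empty then show ?case using xF by simp
  next
    case (insert j S)
    have "x0 + (\<Sum>j\<in>S. (y $ j - x0 $ j) *\<^sub>R axis j 1) + (y $ j - x0 $ j) *\<^sub>R axis j 1 \<in> F"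
      by (rule line_invariant_axis_shift[OF inv insert.IH])
    then show ?case using insert.hyps by (simp add: algebra_simps)
  qed
  have "(\<Sum>j\<in>UNIV. (y $ j - x0 $ j) *\<^sub>R axis j (1::real)) = y - x0"
    by (simp add: vec_eq_iff axis_def if_distrib cong: if_cong)
  then show ?thesis using fin[of UNIV] by simp
qed

lemma subsolution_constant:
  fixes b :: "'a \<Rightarrow> ('d::finite) pt \<Rightarrow> 'd hz" and c :: "'a \<Rightarrow> 'd pt \<Rightarrow> real" and u :: "'d pt \<Rightarrow> real"
  assumes sub: "visc_sub (\<lambda>x r p M. pucci_minus l L M + (INF \<alpha>. c \<alpha> x * r - b \<alpha> x \<bullet> p)) u"
    and lpos: "0 < l" and lL: "l \<le> L"
    and Hi_fin: "\<forall>x r p. bdd_below (range (\<lambda>\<alpha>. c \<alpha> x * r - b \<alpha> x \<bullet> p))"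
    and b_lip: "\<forall>R>0. \<exists>K. \<forall>\<alpha> x y. norm x \<le> R \<longrightarrow> norm y \<le> R \<longrightarrow>
                   norm (b \<alpha> x - b \<alpha> y) \<le> K * norm (x - y)"
    and c_nonneg: "\<forall>\<alpha> x. c \<alpha> x \<ge> 0"
    and structural: "\<forall>x. hrho x \<ge> R0 \<longrightarrow> hproj x \<noteq> 0 \<longrightarrow>
               (\<forall>\<alpha>. b \<alpha> x \<bullet> heta x / (norm (hproj x))\<^sup>2
                     - c \<alpha> x * (hrho x ^ 4 / (norm (hproj x))\<^sup>2) * ln (hrho x)
                   \<le> l - L * ((2 * real CARD('d) + 2) - 1))"
    and ls: "Limsup at_infinity (\<lambda>x. ereal (u x / ln (hrho x))) \<le> 0"
    and cu: "(\<forall>\<alpha> x. c \<alpha> x = 0) \<or> (\<forall>x. u x \<ge> 0)"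
  shows "\<exists>k. \<forall>x. u x = k"
proof -
  obtain z where uz: "\<And>x. u x \<le> u z"
    using subsolution_attains_max[OF sub lpos lL Hi_fin b_lip c_nonneg structural ls cu] by blast
  define F where "F = {x. u x = u z}"
  have "F = - {x. u x < u z}" unfolding F_def using uz by (auto simp: order.order_iff_strict)
  moreover have "open {x. u x < u z}" using sub unfolding visc_sub_def usc_def by blast
  ultimately have "closed F" by (simp add: closed_Compl)
  have cu0: "c \<alpha> x * u x \<ge> 0" for \<alpha> x
    using cu c_nonneg by (metis mult_eq_0_iff mult_nonneg_nonneg order_refl)
  have inv: "x + s *\<^sub>R hfield i x \<in> F" if "x \<in> F" for x i s
  proof (rule line_invariant_of_tangency[OF \<open>closed F\<close> that])
    fix q y assume "q \<notin> F" "y \<in> F" "\<forall>y'. dist y' q < dist q y \<longrightarrow> y' \<notin> F"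
    then show "(y - q) \<bullet> hfield i y = 0"
      using hopf_tangency[OF sub lpos lL Hi_fin b_lip cu0 uz] uz unfolding F_def
      by (metis (mono_tags) mem_Collect_eq order_less_le)
  qed
  have "y \<in> F" for y using line_invariant_UNIV[OF inv, of z] by (simp add: F_def)
  then show ?thesis unfolding F_def by blast
qed

theorem theorem4p2:
  fixes l L :: real
    and b :: "'a \<Rightarrow> ('d::finite) pt \<Rightarrow> 'd hz"
    and c :: "'a \<Rightarrow> 'd pt \<Rightarrow> real"
  defines "Q \<equiv> 2 * real CARD('d) + 2"
  defines "Hi \<equiv> (\<lambda>x r p. INF \<alpha>. c \<alpha> x * r - b \<alpha> x \<bullet> p)"
  defines "Hs \<equiv> (\<lambda>x r p. SUP \<alpha>. c \<alpha> x * r - b \<alpha> x \<bullet> p)"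
  assumes lpos: "0 < l" and lL: "l \<le> L"
    and Hi_fin: "\<forall>x r p. bdd_below (range (\<lambda>\<alpha>. c \<alpha> x * r - b \<alpha> x \<bullet> p))"
    and Hs_fin: "\<forall>x r p. bdd_above (range (\<lambda>\<alpha>. c \<alpha> x * r - b \<alpha> x \<bullet> p))"
    and b_lip: "\<forall>R>0. \<exists>K. \<forall>\<alpha> x y. norm x \<le> R \<longrightarrow> norm y \<le> R \<longrightarrow>
                   norm (b \<alpha> x - b \<alpha> y) \<le> K * norm (x - y)"
    and c_nonneg: "\<forall>\<alpha> x. c \<alpha> x \<ge> 0"
    and c_cont: "\<forall>R>0. \<forall>\<epsilon>>0. \<exists>\<delta>>0. \<forall>\<alpha> x y. norm x \<le> R \<longrightarrow> norm y \<le> R \<longrightarrow>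
                   norm (x - y) < \<delta> \<longrightarrow> \<bar>c \<alpha> x - c \<alpha> y\<bar> < \<epsilon>"
    and key: "\<exists>R0. \<forall>x. hrho x \<ge> R0 \<longrightarrow> hproj x \<noteq> 0 \<longrightarrow>
               (\<forall>\<alpha>. b \<alpha> x \<bullet> heta x / (norm (hproj x))\<^sup>2
                     - c \<alpha> x * (hrho x ^ 4 / (norm (hproj x))\<^sup>2) * ln (hrho x)
                   \<le> l - L * (Q - 1))"
  shows "(\<forall>u. visc_sub (\<lambda>x r p M. pucci_minus l L M + Hi x r p) u
            \<longrightarrow> Limsup at_infinity (\<lambda>x. ereal (u x / ln (hrho x))) \<le> 0
            \<longrightarrow> ((\<forall>\<alpha> x. c \<alpha> x = 0) \<or> (\<forall>x. u x \<ge> 0))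
            \<longrightarrow> (\<exists>k. \<forall>x. u x = k))
       \<and> (\<forall>v. visc_super (\<lambda>x r p M. pucci_plus l L M + Hs x r p) v
            \<longrightarrow> Liminf at_infinity (\<lambda>x. ereal (v x / ln (hrho x))) \<ge> 0
            \<longrightarrow> ((\<forall>\<alpha> x. c \<alpha> x = 0) \<or> (\<forall>x. v x \<le> 0))
            \<longrightarrow> (\<exists>k. \<forall>x. v x = k))"
proof -
  obtain R0 where structural: "\<forall>x. hrho x \<ge> R0 \<longrightarrow> hproj x \<noteq> 0 \<longrightarrow>
               (\<forall>\<alpha>. b \<alpha> x \<bullet> heta x / (norm (hproj x))\<^sup>2
                     - c \<alpha> x * (hrho x ^ 4 / (norm (hproj x))\<^sup>2) * ln (hrho x)
                   \<le> l - L * ((2 * real CARD('d) + 2) - 1))"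
    using key unfolding Q_def by blast
  note part_A = subsolution_constant[OF _ lpos lL Hi_fin b_lip c_nonneg structural]
  show ?thesis
  proof (intro conjI allI impI)
    fix u assume "visc_sub (\<lambda>x r p M. pucci_minus l L M + Hi x r p) u"
      and "Limsup at_infinity (\<lambda>x. ereal (u x / ln (hrho x))) \<le> 0"
      and "(\<forall>\<alpha> x. c \<alpha> x = 0) \<or> (\<forall>x. u x \<ge> 0)"
    then show "\<exists>k. \<forall>x. u x = k" using part_A unfolding Hi_def by blast
  next
    fix v assume sup: "visc_super (\<lambda>x r p M. pucci_plus l L M + Hs x r p) v"
      and li: "Liminf at_infinity (\<lambda>x. ereal (v x / ln (hrho x))) \<ge> 0"
      and cv: "(\<forall>\<alpha> x. c \<alpha> x = 0) \<or> (\<forall>x. v x \<le> 0)"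
    have "Limsup at_infinity (\<lambda>x. ereal (- v x / ln (hrho x))) \<le> 0"
      using li ereal_Limsup_uminus[of at_infinity "\<lambda>x. ereal (v x / ln (hrho x))"] by simp
    then obtain k where "\<forall>x. - v x = k"
      using part_A[OF visc_super_uminus_visc_sub[OF sup[unfolded Hs_def]]] cv by force
    then show "\<exists>k. \<forall>x. v x = k" by (metis minus_minus)
  qed
qed

end
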